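(* Let $\mathcal{T},\mathcal{W}\in\mathbb{K}^{R\times R\times 2}$. Assume $\mathcal{T}$ has $\mathbb{K}$-rank $R$ with CPD $[\![\mathbf{A},\mathbf{B},\mathbf{C}]\!]$, where the columns of $\mathbf{C}$ have unit Euclidean norm, and let $\{\mathscr{L}_r\}_{r=1}^R$ be the spectrum of $\mathcal{T}$. If $$\|\mathcal{T}-\mathcal{W}\|_{\mathrm{sp}}<\frac{\sigma_{\min}(\mathbf{A})\,\sigma_{\min}(\mathbf{B})\,\min_{i\neq j}\chi(\mathscr{L}_i,\mathscr{L}_j)}{2},$$ then $\mathcal{W}$ is a simple tensor of $\mathbb{K}$-rank $R$, and $$\mathrm{md}[\mathcal{T},\mathcal{W}]\leq\frac{\|\mathcal{T}-\mathcal{W}\|_{\mathrm{sp}}}{\sigma_{\min}(\mathbf{A})\,\sigma_{\min}(\mathbf{B})}.$$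
   Context: $\mathbb{K}$ denotes $\mathbb{R}$ or $\mathbb{C}$; $\sigma_{\min}$ is the smallest (possibly zero) singular value. $\mathbb{K}$-rank and CPD $[\![\mathbf{A},\mathbf{B},\mathbf{C}]\!]=\sum_r\mathbf{a}_r\otimes\mathbf{b}_r\otimes\mathbf{c}_r$ as usual (minimal number of rank one terms with $\mathbb{K}$-factors). For $\mathcal{T}\in\mathbb{K}^{R\times R\times K}$ with slices $\mathbf{T}_k$: a nonzero $\mathbf{x}$ is a JGE vector if $\mathbf{T}_\ell\mathbf{x}=\lambda_\ell\mathbf{y}$ for all $\ell$ for some $\boldsymbol{\lambda}\in\mathbb{K}^K$ and nonzero $\mathbf{y}$; $\mathrm{span}(\boldsymbol{\lambda})$ is then a JGE value. The characteristic polynomial is $p_{\mathcal{T}}(\boldsymbol{\gamma})=\det(\sum_k\gamma_k\mathbf{T}_k)$; the algebraic multiplicity of $\mathrm{span}(\boldsymbol{\lambda})$ is the largest $m$ with $(\sum_k\lambda_k\gamma_k)^m\mid p_{\mathcal{T}}$. If $p_{\mathcal{T}}\not\equiv0$ factors as a product of $R$ linear forms $\prod_r(\sum_k\lambda_{r,k}\gamma_k)$, the spectrum is the list $\mathrm{span}(\boldsymbol{\lambda}_1),\dots,\mathrm{span}(\boldsymbol{\lambda}_R)$ (with multiplicity); for $\mathcal{T}=[\![\mathbf{A},\mathbf{B},\mathbf{C}]\!]$ of rank $R$ with $\mathbf{A},\mathbf{B}$ invertible it consists of the spans of the columns of $\mathbf{C}$. $\mathcal{T}$ is simple if some linear combination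 of its slices is invertible and $p_{\mathcal{T}}$ is a product of $R$ pairwise non-proportional linear forms. Chordal metric: $\chi(\mathscr{L}_1,\mathscr{L}_2)$ is the sine of the angle between one-dimensional subspaces. Matching distance: for spectra $\{\mathscr{L}_{1,r}\}$, $\{\mathscr{L}_{2,r}\}$ of $\mathcal{T}_1,\mathcal{T}_2$, $\mathrm{md}[\mathcal{T}_1,\mathcal{T}_2]=\min_{\pi\in S_R}\max_{r}\chi(\mathscr{L}_{1,r},\mathscr{L}_{2,\pi(r)})$. Spectral norm: $\|\mathcal{M}\|_{\mathrm{sp}}=\max_{\|\mathbf{x}\|=\|\mathbf{y}\|=\|\mathbf{z}\|=1}|\mathcal{M}\cdot_1\mathbf{x}\cdot_2\mathbf{y}\cdot_3\mathbf{z}|$. *)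

theory Defs
  imports "HOL-Analysis.Analysis"
begin

text \<open>The field K is encoded by a flag: realK = True means K = reals (embedded in the
complex numbers), realK = False means K = complex numbers.\<close>

definition inK :: "bool \<Rightarrow> complex \<Rightarrow> bool" where
  "inK realK z \<longleftrightarrow> (realK \<longrightarrow> z \<in> \<real>)"

definition vecK :: "bool \<Rightarrow> complex ^ 'n \<Rightarrow> bool" where
  "vecK realK x \<longleftrightarrow> (\<forall>i. inK realK (x $ i))"

type_synonym ('i, 'j, 'k) tensor = "'i \<Rightarrow> 'j \<Rightarrow> 'k \<Rightarrow> complex"

definition tensorK :: "bool \<Rightarrow> ('i, 'j, 'k) tensor \<Rightarrow> bool" where
  "tensorK realK T \<longleftrightarrow> (\<forall>i j k. inK realK (T i j k))"

definition cpd :: "complex ^ 'r ^ 'i \<Rightarrow> complex ^ 'r ^ 'j \<Rightarrow> complex ^ 'r ^ 'k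
    \<Rightarrow> ('i::finite, 'j::finite, 'k::finite) tensor" where
  "cpd A B C = (\<lambda>i j k. \<Sum>r\<in>UNIV. A $ i $ r * B $ j $ r * C $ k $ r)"

definition rank_le :: "bool \<Rightarrow> ('i::finite, 'j::finite, 'k::finite) tensor \<Rightarrow> nat \<Rightarrow> bool" where
  "rank_le realK T m \<longleftrightarrow>
     (\<exists>a b c. (\<forall>r i. inK realK (a r i)) \<and> (\<forall>r j. inK realK (b r j)) \<and>
              (\<forall>r k. inK realK (c r k)) \<and>
              T = (\<lambda>i j k. \<Sum>r<m. a r i * b r j * c r k))"

definition Krank :: "bool \<Rightarrow> ('i::finite, 'j::finite, 'k::finite) tensor \<Rightarrow> nat" where
  "Krank realK T = (LEAST m. rank_le realK T m)"

definition slice :: "('i, 'j, 'k) tensor \<Rightarrow> 'k \<Rightarrow> complex ^ 'j ^ 'i" where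
  "slice T k = (\<chi> i j. T i j k)"

definition slicecomb :: "('n::finite, 'n, 'k::finite) tensor \<Rightarrow> complex ^ 'k \<Rightarrow> complex ^ 'n ^ 'n" where
  "slicecomb T \<gamma> = (\<Sum>k\<in>UNIV. (\<chi> i j. \<gamma> $ k * slice T k $ i $ j))"

definition charpoly :: "('n::finite, 'n, 'k::finite) tensor \<Rightarrow> complex ^ 'k \<Rightarrow> complex" where
  "charpoly T \<gamma> = det (slicecomb T \<gamma>)"

definition linform :: "complex ^ 'k \<Rightarrow> complex ^ 'k \<Rightarrow> complex" where
  "linform l \<gamma> = (\<Sum>k\<in>UNIV. l $ k * \<gamma> $ k)"

text \<open>L r are representatives of the lines of the spectrum of T: p_T is not identically
zero and factors as the product of the R linear forms with coefficient vectors L r in K^2.\<close>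
definition is_spectrum :: "bool \<Rightarrow> ('n::finite, 'n, 'k::finite) tensor \<Rightarrow> ('n \<Rightarrow> complex ^ 'k) \<Rightarrow> bool" where
  "is_spectrum realK T L \<longleftrightarrow>
     (\<forall>r. vecK realK (L r)) \<and>
     (\<exists>\<gamma>. vecK realK \<gamma> \<and> charpoly T \<gamma> \<noteq> 0) \<and>
     (\<forall>\<gamma>. vecK realK \<gamma> \<longrightarrow> charpoly T \<gamma> = (\<Prod>r\<in>UNIV. linform (L r) \<gamma>))"

definition proportional :: "complex ^ 'k \<Rightarrow> complex ^ 'k \<Rightarrow> bool" where
  "proportional u v \<longleftrightarrow> (\<exists>c. u = c *s v) \<or> (\<exists>c. v = c *s u)"

definition simple_tensor :: "bool \<Rightarrow> ('n::finite, 'n, 'k::finite) tensor \<Rightarrow> bool" where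
  "simple_tensor realK T \<longleftrightarrow>
     (\<exists>\<gamma>. vecK realK \<gamma> \<and> invertible (slicecomb T \<gamma>)) \<and>
     (\<exists>L :: 'n \<Rightarrow> complex ^ 'k. (\<forall>r. vecK realK (L r)) \<and>
          (\<forall>\<gamma>. vecK realK \<gamma> \<longrightarrow> charpoly T \<gamma> = (\<Prod>r\<in>UNIV. linform (L r) \<gamma>)) \<and>
          (\<forall>r s. r \<noteq> s \<longrightarrow> \<not> proportional (L r) (L s)))"

text \<open>Chordal metric: sine of the angle between span u and span v.\<close>
definition chordal :: "complex ^ 'k \<Rightarrow> complex ^ 'k \<Rightarrow> real" where
  "chordal u v = sqrt (1 - (cmod (\<Sum>k\<in>UNIV. cnj (u $ k) * v $ k))\<^sup>2 / ((norm u)\<^sup>2 * (norm v)\<^sup>2))"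

definition md :: "('n::finite \<Rightarrow> complex ^ 'k) \<Rightarrow> ('n \<Rightarrow> complex ^ 'k) \<Rightarrow> real" where
  "md L1 L2 = Min ((\<lambda>\<pi>. Max ((\<lambda>r. chordal (L1 r) (L2 (\<pi> r))) ` UNIV)) ` {\<pi>. \<pi> permutes UNIV})"

definition spnorm :: "bool \<Rightarrow> ('i::finite, 'j::finite, 'k::finite) tensor \<Rightarrow> real" where
  "spnorm realK M = Sup {cmod (\<Sum>i\<in>UNIV. \<Sum>j\<in>UNIV. \<Sum>k\<in>UNIV. M i j k * x $ i * y $ j * z $ k) |x y z.
       norm x = 1 \<and> norm y = 1 \<and> norm z = 1 \<and> vecK realK x \<and> vecK realK y \<and> vecK realK z}"

definition sigma_min :: "complex ^ 'n ^ 'n \<Rightarrow> real" where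
  "sigma_min A = Inf {norm (A *v x) | x. norm x = 1}"

end

theory Submission
  imports Defs "HOL-Complex_Analysis.Conformal_Mappings"
begin

text \<open>Every slice combination factors as \<open>T\<^sub>\<gamma> = A diag(C\<^sup>T \<gamma>) B\<^sup>T\<close>,
  so the spectrum of \<open>T\<close> consists of the lines spanned by the columns \<open>c\<^sub>r\<close> of \<open>C\<close>, and \<open>\<delta>\<close>
  is the least chordal distance between two of them. If \<open>perp l\<close> is a root of the characteristic
  polynomial of \<open>T - t E\<close>, where \<open>E = T - W\<close> and \<open>0 \<le> t \<le> 1\<close>, a kernel vector \<open>y\<close> gives
  \<open>\<sigma>\<^sub>m\<^sub>i\<^sub>n(A) \<sigma>\<^sub>m\<^sub>i\<^sub>n(B) min\<^sub>s |c\<^sub>s \<cdot> perp l| \<parallel>y\<parallel> \<le> \<parallel>T\<^sub>\<gamma> y\<parallel> \<le> \<parallel>E\<parallel>\<^sub>s\<^sub>p \<parallel>l\<parallel> \<parallel>y\<parallel>\<close>, so every root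
  line lies within chordal distance \<open>\<epsilon> = \<parallel>E\<parallel>\<^sub>s\<^sub>p / (\<sigma>\<^sub>m\<^sub>i\<^sub>n(A) \<sigma>\<^sub>m\<^sub>i\<^sub>n(B)) < \<delta> / 2\<close> of some
  \<open>c\<^sub>r\<close>. Hence no root crosses the boundary of the chordal ball of radius \<open>\<delta> / 2\<close> around
  \<open>c\<^sub>r\<close> while \<open>t\<close> runs from \<open>0\<close> to \<open>1\<close>, and the root \<open>c\<^sub>r\<close> of \<open>T\<close> survives inside it: by the
  intermediate value theorem over \<open>\<real>\<close>, by the minimum modulus principle over \<open>\<complex>\<close>. So \<open>W\<close>
  has \<open>R\<close> distinct root lines, each within \<open>\<epsilon>\<close> of its own \<open>c\<^sub>r\<close>. Kernel vectors at these
  roots diagonalise the pencil of \<open>W\<close>, which yields a CPD of \<open>W\<close> with \<open>R\<close> terms, hence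
  simplicity and \<open>\<bbbK>\<close>-rank \<open>R\<close>, and matching the root lines with the spectra bounds the
  matching distance by \<open>\<epsilon>\<close>.\<close>

section \<open>Vectors and matrices over \<open>\<bbbK>\<close>\<close>

lemma inK_intros:
  "inK rK 0" "inK rK 1" "inK rK (of_real x)"
  "inK rK a \<Longrightarrow> inK rK b \<Longrightarrow> inK rK (a + b)"
  "inK rK a \<Longrightarrow> inK rK b \<Longrightarrow> inK rK (a - b)"
  "inK rK a \<Longrightarrow> inK rK (- a)"
  "inK rK a \<Longrightarrow> inK rK b \<Longrightarrow> inK rK (a * b)"
  "inK rK a \<Longrightarrow> inK rK b \<Longrightarrow> inK rK (a / b)"
  "inK rK a \<Longrightarrow> inK rK (x *\<^sub>R a)"
  "inK rK a \<Longrightarrow> inK rK (cnj a)"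
  "(\<And>i. i \<in> S \<Longrightarrow> inK rK (f i)) \<Longrightarrow> inK rK (sum f S)"
  "(\<And>i. i \<in> S \<Longrightarrow> inK rK (f i)) \<Longrightarrow> inK rK (prod f S)"
  by (auto simp: inK_def Reals_cnj_iff scaleR_conv_of_real)

lemma vecK_complex: "\<not> rK \<Longrightarrow> vecK rK x"
  by (simp add: vecK_def inK_def)

lemma vecK_axis: "vecK rK (axis i 1)"
  by (auto simp: vecK_def axis_def inK_def)

lemma vecK_scaleR: "vecK rK x \<Longrightarrow> vecK rK (r *\<^sub>R x)"
  by (simp add: vecK_def inK_intros)

definition matK :: "bool \<Rightarrow> complex ^ 'n ^ 'm \<Rightarrow> bool" where
  "matK rK M \<longleftrightarrow> (\<forall>i j. inK rK (M $ i $ j))"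

lemma det_inK: "matK rK M \<Longrightarrow> inK rK (det M)"
  unfolding det_def matK_def by (intro inK_intros) (auto simp: inK_def)

lemma vecK_column: "matK rK M \<Longrightarrow> vecK rK (column r M)"
  by (simp add: matK_def vecK_def column_def)

lemma matK_right_inverse:
  fixes M M' :: "complex ^ 'n ^ 'n"
  assumes MK: "matK rK M" and inv: "M ** M' = mat 1"
  shows "matK rK M'"
  unfolding matK_def
proof (intro allI)
  fix k j
  have "det M \<noteq> 0"
    using inv invertible_det_nz invertible_right_inverse by blast
  moreover have "M *v (M' *v axis j 1) = axis j 1"
    by (simp add: matrix_vector_mul_assoc inv)
  ultimately have "M' *v axis j 1 = (\<chi> k. det (\<chi> i i'. if i' = k then axis j 1 $ i else M $ i $ i') / det M)"
    using cramer by blast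
  moreover have "(M' *v axis j 1) $ k = M' $ k $ j"
    unfolding matrix_vector_mult_def axis_def by (simp add: if_distrib[of "(*) _"] cong: if_cong)
  ultimately have "M' $ k $ j = det (\<chi> i i'. if i' = k then axis j 1 $ i else M $ i $ i') / det M"
    by simp
  moreover have "matK rK (\<chi> i i'. if i' = k then axis j 1 $ i else M $ i $ i')"
    using MK by (auto simp: matK_def axis_def inK_def)
  ultimately show "inK rK (M' $ k $ j)"
    using MK by (simp add: det_inK inK_intros)
qed

text \<open>Over the reals, the real and imaginary parts of a complex kernel vector are kernel vectors.\<close>

lemma kernel_vecK_of_det_eq_0:
  fixes M :: "complex ^ 'n ^ 'n"
  assumes MK: "matK rK M" and d: "det M = 0"
  shows "\<exists>y. vecK rK y \<and> y \<noteq> 0 \<and> M *v y = 0"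
proof -
  have "\<not> inj ((*v) M)"
    using det_nz_iff_inj_gen[OF matrix_vector_mul_linear_gen[of M]] d by simp
  then obtain y where y: "y \<noteq> 0" "M *v y = 0"
    by (metis (no_types) injI matrix_vector_mult_diff_distrib right_minus_eq)
  show ?thesis
  proof (cases rK)
    case False
    then show ?thesis using y vecK_complex by blast
  next
    case True
    then have Mr: "M $ i $ j = of_real (Re (M $ i $ j))" for i j
      using MK by (auto simp: matK_def inK_def Reals_def)
    define re where "re = (\<chi> j. complex_of_real (Re (y $ j)))"
    define im where "im = (\<chi> j. complex_of_real (Im (y $ j)))"
    have "M *v re = (\<chi> i. complex_of_real (Re ((M *v y) $ i)))"
      unfolding re_def matrix_vector_mult_def vec_eq_iff
      by (auto simp: Re_sum of_real_sum intro!: sum.cong) (subst (1 2) Mr, simp)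
    then have Mre: "M *v re = 0" using y by (simp add: vec_eq_iff)
    have "M *v im = (\<chi> i. complex_of_real (Im ((M *v y) $ i)))"
      unfolding im_def matrix_vector_mult_def vec_eq_iff
      by (auto simp: Im_sum of_real_sum intro!: sum.cong) (subst (1 2) Mr, simp)
    then have Mim: "M *v im = 0" using y by (simp add: vec_eq_iff)
    have "re \<noteq> 0 \<or> im \<noteq> 0"
      using y(1) by (auto simp: re_def im_def vec_eq_iff complex_eq_iff)
    moreover have "vecK rK re" "vecK rK im"
      by (auto simp: vecK_def inK_def re_def im_def)
    ultimately show ?thesis using Mre Mim by blast
  qed
qed

section \<open>Lines in \<open>\<bbbK>\<^sup>2\<close> and the chordal metric\<close>

definition wedge :: "complex ^ 2 \<Rightarrow> complex ^ 2 \<Rightarrow> complex" where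
  "wedge u v = u $ 1 * v $ 2 - u $ 2 * v $ 1"

definition perp :: "complex ^ 2 \<Rightarrow> complex ^ 2" where
  "perp l = (\<chi> k. if k = 1 then - l $ 2 else l $ 1)"

definition cperp :: "complex ^ 2 \<Rightarrow> complex ^ 2" where
  "cperp c = (\<chi> k. if k = 1 then - cnj (c $ 2) else cnj (c $ 1))"

lemma perp_nth [simp]: "perp l $ 1 = - l $ 2" "perp l $ 2 = l $ 1"
  by (auto simp: perp_def)

lemma cperp_nth [simp]: "cperp c $ 1 = - cnj (c $ 2)" "cperp c $ 2 = cnj (c $ 1)"
  by (auto simp: cperp_def)

lemma linform_2: "linform (l :: complex ^ 2) g = l $ 1 * g $ 1 + l $ 2 * g $ 2"
  by (simp add: linform_def sum_2)

lemma linform_perp: "linform q (perp l) = - wedge q l"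
  by (simp add: linform_2 wedge_def)

lemma linform_scale: "linform (c *s l) g = c * linform l g"
  by (simp add: linform_def sum_distrib_left algebra_simps)

lemma wedge_commute: "wedge v u = - wedge u v"
  by (simp add: wedge_def)

lemma wedge_self [simp]: "wedge u u = 0"
  by (simp add: wedge_def)

lemma wedge_scale_left: "wedge (c *s u) v = c * wedge u v"
  and wedge_scale_right: "wedge u (c *s v) = c * wedge u v"
  by (simp_all add: wedge_def algebra_simps)

lemma wedge_expansion: "wedge a b *s c = wedge c b *s a + wedge a c *s b"
  unfolding vec_eq_iff forall_2 wedge_def by (simp add: algebra_simps)

lemma wedge_linform_identity:
  "linform l e * linform m g - linform m e * linform l g = wedge l m * wedge e g"
  by (simp add: linform_2 wedge_def algebra_simps)

lemma proportional_imp_wedge_eq_0: "proportional u v \<Longrightarrow> wedge u v = 0"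
  unfolding proportional_def by (auto simp: wedge_scale_left wedge_scale_right)

lemma vecK_perp: "vecK rK l \<Longrightarrow> vecK rK (perp l)"
  and vecK_cperp: "vecK rK l \<Longrightarrow> vecK rK (cperp l)"
  unfolding vecK_def forall_2 by (auto intro: inK_intros)

lemma inK_wedge: "vecK rK u \<Longrightarrow> vecK rK v \<Longrightarrow> inK rK (wedge u v)"
  and inK_linform: "vecK rK u \<Longrightarrow> vecK rK v \<Longrightarrow> inK rK (linform u v)"
  unfolding vecK_def wedge_def linform_2 by (auto intro!: inK_intros)

lemma norm_vec_squared: "(norm (v :: complex ^ 'n))\<^sup>2 = (\<Sum>i\<in>UNIV. (cmod (v $ i))\<^sup>2)"
  by (simp add: norm_vec_def L2_set_def sum_nonneg)

lemma norm_vec2_squared: "(norm (x :: complex ^ 2))\<^sup>2 = (cmod (x $ 1))\<^sup>2 + (cmod (x $ 2))\<^sup>2"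
  by (simp add: norm_vec_squared sum_2)

lemma sum_cnj_mult_self: "(\<Sum>i\<in>UNIV. cnj (v $ i) * v $ i) = of_real ((norm (v :: complex ^ 'n))\<^sup>2)"
  unfolding norm_vec_squared of_real_sum
  by (rule sum.cong) (simp_all add: mult.commute complex_norm_square[symmetric] of_real_power)

lemma norm_scale: "norm (c *s (x :: complex ^ 'n)) = cmod c * norm x"
proof -
  have "(norm (c *s x))\<^sup>2 = (cmod c * norm x)\<^sup>2"
    unfolding norm_vec_squared power_mult_distrib by (simp add: norm_mult power_mult_distrib sum_distrib_left)
  then show ?thesis by (simp add: power2_eq_iff_nonneg)
qed

lemma scale_eq_0_iff: "(c :: complex) *s (x :: complex ^ 'n) = 0 \<longleftrightarrow> c = 0 \<or> x = 0"
  using norm_scale[of c x] by (metis mult_eq_0_iff norm_eq_zero)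

lemma norm_perp: "norm (perp l) = norm l"
proof -
  have "(norm (perp l))\<^sup>2 = (norm l)\<^sup>2" by (simp add: norm_vec2_squared)
  then show ?thesis by simp
qed

lemma perp_eq_0_iff: "perp l = 0 \<longleftrightarrow> l = 0"
  by (metis norm_eq_zero norm_perp)

lemma wedge_eq_0_trans:
  assumes "u \<noteq> 0" "wedge u v = 0" "wedge u w = 0"
  shows "wedge v w = 0"
proof -
  have "wedge v w *s u = wedge u w *s v + wedge v u *s w" by (rule wedge_expansion)
  also have "\<dots> = 0" using assms wedge_commute[of u v] by simp
  finally show ?thesis using assms(1) scale_eq_0_iff by blast
qed

lemma lagrange_identity_2:
  "(norm u)\<^sup>2 * (norm v)\<^sup>2 = (cmod (\<Sum>k\<in>UNIV. cnj (u $ k) * v $ k))\<^sup>2 + (cmod (wedge u v))\<^sup>2"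
  unfolding norm_vec2_squared sum_2 wedge_def cmod_power2
  by (simp add: power2_eq_square algebra_simps)

lemma chordal_wedge:
  fixes u v :: "complex ^ 2"
  assumes "u \<noteq> 0" "v \<noteq> 0"
  shows "chordal u v = cmod (wedge u v) / (norm u * norm v)"
proof -
  define a where "a = (cmod (\<Sum>k\<in>UNIV. cnj (u $ k) * v $ k))\<^sup>2"
  define b where "b = (cmod (wedge u v))\<^sup>2"
  define P where "P = (norm u)\<^sup>2 * (norm v)\<^sup>2"
  have "P = a + b"
    using lagrange_identity_2[of u v] unfolding a_def b_def P_def by simp
  moreover have "P > 0"
    using assms unfolding P_def by simp
  ultimately have "1 - a / P = b / P" by (simp add: field_simps)
  also have "\<dots> = (cmod (wedge u v) / (norm u * norm v))\<^sup>2"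
    unfolding b_def P_def by (simp add: power_divide power_mult_distrib)
  finally show ?thesis unfolding chordal_def a_def P_def by simp
qed

lemma chordal_le_1: "chordal (u :: complex ^ 2) v \<le> 1"
  unfolding chordal_def by simp

lemma chordal_commute: "u \<noteq> 0 \<Longrightarrow> v \<noteq> 0 \<Longrightarrow> chordal u v = chordal v (u :: complex ^ 2)"
  by (simp add: chordal_wedge wedge_commute[of v u] mult.commute)

lemma chordal_eq_0_iff: "u \<noteq> 0 \<Longrightarrow> v \<noteq> 0 \<Longrightarrow> chordal u v = 0 \<longleftrightarrow> wedge u (v :: complex ^ 2) = 0"
  by (simp add: chordal_wedge)

lemma chordal_triangle:
  fixes a b c :: "complex ^ 2"
  assumes "a \<noteq> 0" "b \<noteq> 0" "c \<noteq> 0"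
  shows "chordal a b \<le> chordal a c + chordal c b"
proof -
  have "cmod (wedge a b) * norm c \<le> cmod (wedge c b) * norm a + cmod (wedge a c) * norm b"
    using norm_triangle_ineq[of "wedge c b *s a" "wedge a c *s b"]
    unfolding wedge_expansion[symmetric] norm_scale by simp
  then have "cmod (wedge a b) * norm c / (norm a * norm b * norm c) \<le>
      (cmod (wedge c b) * norm a + cmod (wedge a c) * norm b) / (norm a * norm b * norm c)"
    by (intro divide_right_mono) auto
  then show ?thesis using assms
    by (simp add: chordal_wedge field_simps)
qed

lemma chordal_cong_left:
  fixes u u' v :: "complex ^ 2"
  assumes "u \<noteq> 0" "u' \<noteq> 0" "v \<noteq> 0" "wedge u u' = 0"
  shows "chordal u v = chordal u' v"
proof -
  have "wedge u' v *s u = wedge u v *s u'"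
    using wedge_expansion[of u' v u] assms(4) wedge_commute[of u u'] by simp
  then have "cmod (wedge u' v) * norm u = cmod (wedge u v) * norm u'"
    by (metis norm_scale)
  then show ?thesis using assms by (simp add: chordal_wedge field_simps)
qed

lemma chordal_cong_right:
  fixes u v v' :: "complex ^ 2"
  assumes "u \<noteq> 0" "v \<noteq> 0" "v' \<noteq> 0" "wedge v v' = 0"
  shows "chordal u v = chordal u v'"
proof -
  have "chordal u v = chordal v u" by (rule chordal_commute[OF assms(1,2)])
  also have "\<dots> = chordal v' u" by (rule chordal_cong_left[OF assms(2,3,1,4)])
  also have "\<dots> = chordal u v'" by (rule chordal_commute[OF assms(3,1)])
  finally show ?thesis .
qed

lemma cmod_linform_perp:
  fixes c l :: "complex ^ 2"
  assumes "norm c = 1" "l \<noteq> 0"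
  shows "cmod (linform c (perp l)) = chordal c l * norm l"
proof -
  have "c \<noteq> 0" using assms(1) by auto
  then show ?thesis using assms chordal_wedge[of c l] by (simp add: linform_perp)
qed

text \<open>Affine chart of the projective line centred at the line through a unit vector \<open>c\<close>
  (\<open>cperp c\<close> is a unit vector orthogonal to \<open>c\<close>); discs around \<open>0\<close> correspond to chordal balls
  around \<open>c\<close>.\<close>

definition chordal_chart :: "complex ^ 2 \<Rightarrow> complex \<Rightarrow> complex ^ 2" where
  "chordal_chart c z = c + z *s cperp c"

lemma wedge_chordal_chart:
  assumes "norm c = 1"
  shows "wedge c (chordal_chart c z) = z"
proof -
  have "complex_of_real ((cmod (c $ 1))\<^sup>2 + (cmod (c $ 2))\<^sup>2) = 1"
    using assms norm_vec2_squared[of c] by simp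
  then have "c $ 1 * cnj (c $ 1) + c $ 2 * cnj (c $ 2) = 1"
    by (simp only: of_real_add complex_norm_square)
  moreover have "wedge c (chordal_chart c z) = z * (c $ 1 * cnj (c $ 1) + c $ 2 * cnj (c $ 2))"
    by (simp add: chordal_chart_def wedge_def algebra_simps)
  ultimately show ?thesis by simp
qed

lemma norm_chordal_chart:
  assumes "norm c = 1"
  shows "norm (chordal_chart c z) = sqrt (1 + (cmod z)\<^sup>2)"
proof -
  have "complex_of_real ((norm (chordal_chart c z))\<^sup>2)
      = complex_of_real (((cmod (c $ 1))\<^sup>2 + (cmod (c $ 2))\<^sup>2) * (1 + (cmod z)\<^sup>2))"
    unfolding norm_vec2_squared chordal_chart_def
    by (simp only: vector_add_component vector_smult_component cperp_nth
        of_real_add of_real_mult of_real_1 complex_norm_square) (simp add: algebra_simps)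
  then have "(norm (chordal_chart c z))\<^sup>2 = 1 + (cmod z)\<^sup>2"
    using assms norm_vec2_squared[of c] by (simp only: of_real_eq_iff) simp
  then show ?thesis by (metis norm_ge_zero real_sqrt_unique)
qed

lemma chordal_chart_nonzero: "norm c = 1 \<Longrightarrow> chordal_chart c z \<noteq> 0"
proof
  assume "norm c = 1" "chordal_chart c z = 0"
  then have "sqrt (1 + (cmod z)\<^sup>2) = 0" using norm_chordal_chart[of c z] by simp
  then show False by (simp add: add_nonneg_eq_0_iff)
qed

lemma chordal_chordal_chart:
  assumes "norm c = 1"
  shows "chordal c (chordal_chart c z) = cmod z / sqrt (1 + (cmod z)\<^sup>2)"
proof -
  have "c \<noteq> 0" using assms by auto
  then show ?thesis
    using assms chordal_chart_nonzero[OF assms]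
    by (simp add: chordal_wedge wedge_chordal_chart norm_chordal_chart)
qed

lemma vecK_chordal_chart: "vecK rK c \<Longrightarrow> vecK rK (chordal_chart c (of_real u))"
  using vecK_cperp[of rK c] by (auto simp: chordal_chart_def vecK_def intro!: inK_intros)

lemma divide_sqrt_one_plus_square_mono:
  fixes x y :: real
  assumes "0 \<le> x" "x \<le> y"
  shows "x / sqrt (1 + x\<^sup>2) \<le> y / sqrt (1 + y\<^sup>2)"
proof (rule power2_le_imp_le)
  have "x\<^sup>2 * (1 + y\<^sup>2) \<le> y\<^sup>2 * (1 + x\<^sup>2)"
    using assms power_mono[OF assms(2), of 2] by (simp add: algebra_simps)
  then show "(x / sqrt (1 + x\<^sup>2))\<^sup>2 \<le> (y / sqrt (1 + y\<^sup>2))\<^sup>2"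
    by (simp add: power_divide divide_simps add_pos_nonneg)
qed (use assms in simp)

lemma divide_sqrt_one_plus_square_inverse:
  fixes \<rho> :: real
  assumes "0 \<le> \<rho>" "\<rho> < 1"
  shows "(\<rho> / sqrt (1 - \<rho>\<^sup>2)) / sqrt (1 + (\<rho> / sqrt (1 - \<rho>\<^sup>2))\<^sup>2) = \<rho>"
proof -
  have p: "1 - \<rho>\<^sup>2 > 0" using assms by (simp add: abs_square_less_1)
  then have "1 + (\<rho> / sqrt (1 - \<rho>\<^sup>2))\<^sup>2 = 1 / (1 - \<rho>\<^sup>2)"
    by (simp add: power_divide field_simps)
  then show ?thesis using p by (simp add: real_sqrt_divide)
qed

section \<open>Spectral norm and smallest singular value\<close>

lemma slicecomb_nth: "slicecomb X g $ i $ j = (\<Sum>k\<in>UNIV. g $ k * X i j k)"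
  unfolding slicecomb_def sum_component vec_lambda_beta slice_def ..

lemma slicecomb_mult_vec_nth:
  "(slicecomb X g *v y) $ i = (\<Sum>j\<in>UNIV. \<Sum>k\<in>UNIV. g $ k * X i j k * y $ j)"
  by (simp add: matrix_vector_mult_def slicecomb_nth sum_distrib_right)

lemma matK_slicecomb: "tensorK rK X \<Longrightarrow> vecK rK g \<Longrightarrow> matK rK (slicecomb X g)"
  unfolding matK_def slicecomb_nth tensorK_def vecK_def by (auto intro!: inK_intros)

lemma spnorm_bdd_above:
  fixes M :: "('i::finite, 'j::finite, 'k::finite) tensor"
  shows "bdd_above {cmod (\<Sum>i\<in>UNIV. \<Sum>j\<in>UNIV. \<Sum>k\<in>UNIV. M i j k * x $ i * y $ j * z $ k) |x y z.
      norm x = 1 \<and> norm y = 1 \<and> norm z = 1 \<and> vecK rK x \<and> vecK rK y \<and> vecK rK z}"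
proof (rule bdd_aboveI, clarify)
  fix x :: "complex ^ 'i" and y :: "complex ^ 'j" and z :: "complex ^ 'k"
  assume unit: "norm x = 1" "norm y = 1" "norm z = 1" "vecK rK x" "vecK rK y" "vecK rK z"
  have "cmod (\<Sum>i\<in>UNIV. \<Sum>j\<in>UNIV. \<Sum>k\<in>UNIV. M i j k * x $ i * y $ j * z $ k)
      \<le> (\<Sum>i\<in>UNIV. \<Sum>j\<in>UNIV. \<Sum>k\<in>UNIV. cmod (M i j k * x $ i * y $ j * z $ k))"
    by (rule order_trans[OF norm_sum sum_mono], rule order_trans[OF norm_sum sum_mono], rule norm_sum)
  also have "\<dots> \<le> (\<Sum>i\<in>UNIV. \<Sum>j\<in>UNIV. \<Sum>k\<in>UNIV. cmod (M i j k))"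
  proof (intro sum_mono)
    fix i j k
    have "cmod (x $ i) \<le> 1" "cmod (y $ j) \<le> 1" "cmod (z $ k) \<le> 1"
      using unit Finite_Cartesian_Product.norm_nth_le[of x i] Finite_Cartesian_Product.norm_nth_le[of y j]
        Finite_Cartesian_Product.norm_nth_le[of z k] by auto
    then show "cmod (M i j k * x $ i * y $ j * z $ k) \<le> cmod (M i j k)"
      unfolding norm_mult mult.assoc by (intro mult_left_le) (auto intro!: mult_le_one)
  qed
  finally show "cmod (\<Sum>i\<in>UNIV. \<Sum>j\<in>UNIV. \<Sum>k\<in>UNIV. M i j k * x $ i * y $ j * z $ k)
      \<le> (\<Sum>i\<in>UNIV. \<Sum>j\<in>UNIV. \<Sum>k\<in>UNIV. cmod (M i j k))" .
qed

lemma spnorm_ge: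
  assumes "norm x = 1" "norm y = 1" "norm z = 1" "vecK rK x" "vecK rK y" "vecK rK z"
  shows "cmod (\<Sum>i\<in>UNIV. \<Sum>j\<in>UNIV. \<Sum>k\<in>UNIV. M i j k * x $ i * y $ j * z $ k) \<le> spnorm rK M"
  unfolding spnorm_def by (rule cSup_upper[OF _ spnorm_bdd_above]) (use assms in blast)

lemma norm_axis_1: "norm (axis i (1::complex)) = 1"
proof -
  have "(cmod (axis i (1::complex) $ j))\<^sup>2 = (if j = i then 1 else 0)" for j
    by (simp add: axis_def)
  then show ?thesis by (simp add: norm_vec_def L2_set_def)
qed

lemma spnorm_nonneg: "0 \<le> spnorm rK (M :: ('i::finite, 'j::finite, 'k::finite) tensor)"
proof -
  fix i0 :: 'i and j0 :: 'j and k0 :: 'k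
  have "0 \<le> cmod (\<Sum>i\<in>UNIV. \<Sum>j\<in>UNIV. \<Sum>k\<in>UNIV. M i j k * axis i0 1 $ i * axis j0 1 $ j * axis k0 1 $ k)"
    by simp
  also have "\<dots> \<le> spnorm rK M"
    by (rule spnorm_ge) (simp_all add: norm_axis_1 vecK_axis)
  finally show ?thesis .
qed

text \<open>Evaluate the trilinear form at the unit vectors \<open>conj v / \<parallel>v\<parallel>\<close>, \<open>y / \<parallel>y\<parallel>\<close>, \<open>g / \<parallel>g\<parallel>\<close>,
  where \<open>v = E\<^sub>g y\<close>.\<close>

lemma norm_slicecomb_le_spnorm:
  fixes E :: "('n::finite, 'n, 'k::finite) tensor"
  assumes EK: "tensorK rK E" and gK: "vecK rK g" and yK: "vecK rK y"
  shows "norm (slicecomb E g *v y) \<le> spnorm rK E * norm g * norm y"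
proof (cases "slicecomb E g *v y = 0 \<or> g = 0 \<or> y = 0")
  case True
  then have "slicecomb E g *v y = 0"
    by (auto simp: vec_eq_iff slicecomb_mult_vec_nth)
  then show ?thesis using spnorm_nonneg[of rK E] by simp
next
  case False
  define v where "v = slicecomb E g *v y"
  have pos: "norm v > 0" "norm g > 0" "norm y > 0" using False v_def by auto
  define x where "x = (1 / norm v) *\<^sub>R (\<chi> i. cnj (v $ i))"
  define g' where "g' = (1 / norm g) *\<^sub>R g"
  define y' where "y' = (1 / norm y) *\<^sub>R y"
  have "vecK rK v" unfolding v_def
    using matK_slicecomb[OF EK gK] yK by (auto simp: vecK_def matK_def matrix_vector_mult_def intro!: inK_intros)
  then have K: "vecK rK x" "vecK rK g'" "vecK rK y'"
    using gK yK unfolding x_def g'_def y'_def by (auto intro!: vecK_scaleR simp: vecK_def inK_intros)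
  have "norm (\<chi> i. cnj (v $ i)) = norm v"
    unfolding norm_vec_def by simp
  then have unit: "norm x = 1" "norm g' = 1" "norm y' = 1"
    using pos by (auto simp: x_def g'_def y'_def)
  define c where "c = complex_of_real (1 / (norm v * norm y * norm g))"
  have term_eq: "E i j k * x $ i * y' $ j * g' $ k = c * cnj (v $ i) * (g $ k * E i j k * y $ j)" for i j k
    unfolding x_def y'_def g'_def c_def vector_scaleR_component vec_lambda_beta
    by (simp add: scaleR_conv_of_real)
  have "(\<Sum>i\<in>UNIV. \<Sum>j\<in>UNIV. \<Sum>k\<in>UNIV. E i j k * x $ i * y' $ j * g' $ k)
      = (\<Sum>i\<in>UNIV. c * cnj (v $ i) * (\<Sum>j\<in>UNIV. \<Sum>k\<in>UNIV. g $ k * E i j k * y $ j))"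
    unfolding term_eq sum_distrib_left by simp
  also have "\<dots> = c * (\<Sum>i\<in>UNIV. cnj (v $ i) * v $ i)"
    unfolding sum_distrib_left v_def slicecomb_mult_vec_nth by (simp add: mult.assoc)
  also have "\<dots> = of_real (norm v / (norm y * norm g))"
    unfolding sum_cnj_mult_self c_def using pos by (simp add: power2_eq_square)
  finally have "norm v / (norm y * norm g) \<le> spnorm rK E"
    using spnorm_ge[OF unit(1,3,2) K(1,3,2), of E] pos
    by (simp only: of_real_mult[symmetric] of_real_divide[symmetric] norm_of_real)
  then show ?thesis using pos unfolding v_def[symmetric] by (simp add: field_simps)
qed

lemma sigma_min_nonneg: "0 \<le> sigma_min A"
  unfolding sigma_min_def by (rule cInf_greatest) (use norm_axis_1 in blast, auto)

lemma sigma_min_mult_norm_le: "sigma_min A * norm x \<le> norm ((A :: complex ^ 'n ^ 'n) *v x)"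
proof (cases "x = 0")
  case False
  then have nx: "norm x > 0" by simp
  have "sigma_min A \<le> norm (A *v ((1 / norm x) *\<^sub>R x))"
    unfolding sigma_min_def using nx by (intro cInf_lower) (auto intro: bdd_belowI[of _ 0])
  also have "\<dots> = norm (A *v x) / norm x"
    by (simp add: linear_cmul[OF matrix_vector_mul_linear])
  finally show ?thesis using nx by (simp add: field_simps)
qed simp

lemma invertible_of_sigma_min_pos:
  fixes A :: "complex ^ 'n ^ 'n"
  assumes "sigma_min A > 0"
  shows "invertible A"
proof -
  have "A *v x = 0 \<Longrightarrow> x = 0" for x
    using sigma_min_mult_norm_le[of A x] assms by (simp add: mult_le_0_iff)
  then have "inj ((*v) A)"
    by (intro injI) (metis matrix_vector_mult_diff_distrib right_minus_eq)
  then have "det A \<noteq> 0"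
    using det_nz_iff_inj_gen[OF matrix_vector_mul_linear_gen[of A]] by simp
  then show ?thesis by (simp add: invertible_det_nz)
qed

lemma cmod_sum_mult_le: "cmod (\<Sum>r\<in>UNIV. (a :: complex ^ 'n) $ r * b $ r) \<le> norm a * norm b"
proof -
  have "cmod (\<Sum>r\<in>UNIV. a $ r * b $ r) \<le> (\<Sum>r\<in>UNIV. \<bar>cmod (a $ r)\<bar> * \<bar>cmod (b $ r)\<bar>)"
    by (rule order_trans[OF norm_sum]) (simp add: norm_mult)
  also have "\<dots> \<le> norm a * norm b"
    unfolding norm_vec_def by (rule L2_set_mult_ineq)
  finally show ?thesis .
qed

text \<open>Duality: pair \<open>B\<^sup>T y\<close> with \<open>x = B\<^sup>-\<^sup>1 conj y\<close>, which has norm at most \<open>\<parallel>y\<parallel> / \<sigma>\<^sub>m\<^sub>i\<^sub>n(B)\<close>.\<close>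

lemma sigma_min_mult_norm_le_transpose:
  fixes B :: "complex ^ 'n ^ 'n"
  assumes "invertible B"
  shows "sigma_min B * norm y \<le> norm (transpose B *v y)"
proof (cases "y = 0")
  case False
  obtain Bi where Bi: "B ** Bi = mat 1" using assms invertible_right_inverse by blast
  define w where "w = (\<chi> j. cnj (y $ j))"
  define x where "x = Bi *v w"
  have Bx: "B *v x = w" unfolding x_def matrix_vector_mul_assoc Bi by simp
  have "norm w = norm y" unfolding w_def norm_vec_def by simp
  then have bound: "sigma_min B * norm x \<le> norm y" using sigma_min_mult_norm_le[of B x] Bx by simp
  have "(\<Sum>r\<in>UNIV. (transpose B *v y) $ r * x $ r) = (\<Sum>r\<in>UNIV. \<Sum>j\<in>UNIV. y $ j * (B $ j $ r * x $ r))"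
    unfolding matrix_vector_mult_def transpose_def
    by (simp add: sum_distrib_left sum_distrib_right mult.commute mult.left_commute)
  also have "\<dots> = (\<Sum>j\<in>UNIV. y $ j * (B *v x) $ j)"
    by (subst sum.swap) (simp add: matrix_vector_mult_def sum_distrib_left)
  also have "\<dots> = of_real ((norm y)\<^sup>2)"
    unfolding Bx w_def using sum_cnj_mult_self[of y] by (simp add: mult.commute)
  finally have "(norm y)\<^sup>2 \<le> norm (transpose B *v y) * norm x"
    using cmod_sum_mult_le[of "transpose B *v y" x]
    by (simp only: norm_of_real abs_power2 of_real_power[symmetric])
  then have "sigma_min B * (norm y)\<^sup>2 \<le> norm (transpose B *v y) * (sigma_min B * norm x)"
    using sigma_min_nonneg[of B] by (simp add: mult_left_mono algebra_simps)
  also have "\<dots> \<le> norm (transpose B *v y) * norm y"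
    by (rule mult_left_mono[OF bound]) simp
  finally show ?thesis using False by (simp add: power2_eq_square)
qed simp

lemma mult_norm_le_componentwise:
  fixes u v :: "complex ^ 'n"
  assumes "0 \<le> d" "\<And>r. d * cmod (v $ r) \<le> cmod (u $ r)"
  shows "d * norm v \<le> norm u"
proof -
  have "norm (d *\<^sub>R v) \<le> norm u" by (rule norm_le_componentwise_cart) (use assms in simp)
  then show ?thesis using assms(1) by simp
qed

section \<open>Slices and rank of a CPD\<close>

definition diag_matrix :: "('n \<Rightarrow> 'a::zero) \<Rightarrow> 'a ^ 'n ^ 'n" where
  "diag_matrix d = (\<chi> i j. if i = j then d i else 0)"

lemma det_diag_matrix: "det (diag_matrix d :: 'a::comm_ring_1 ^ 'n ^ 'n) = (\<Prod>i\<in>UNIV. d i)"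
  by (subst det_diagonal) (auto simp: diag_matrix_def)

lemma matrix_mult_diag_matrix_nth:
  "(M ** diag_matrix d) $ i $ j = M $ i $ j * (d j :: 'a::comm_ring_1)"
proof -
  have "(\<Sum>k\<in>UNIV. M $ i $ k * diag_matrix d $ k $ j) = (\<Sum>k\<in>UNIV. if k = j then M $ i $ j * d j else 0)"
    by (rule sum.cong) (auto simp: diag_matrix_def)
  then show ?thesis by (simp add: matrix_matrix_mult_def)
qed

lemma diag_matrix_mult_vec: "diag_matrix d *v x = (\<chi> r. d r * x $ r)"
proof -
  have "(\<Sum>j\<in>UNIV. diag_matrix d $ r $ j * x $ j) = (\<Sum>j\<in>UNIV. if j = r then d r * x $ r else 0)" for r
    by (rule sum.cong) (auto simp: diag_matrix_def)
  then show ?thesis by (simp add: vec_eq_iff matrix_vector_mult_def)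
qed

lemma slicecomb_cpd:
  "slicecomb (cpd A B C) g = A ** diag_matrix (\<lambda>r. linform (column r C) g) ** transpose B"
proof -
  have "slicecomb (cpd A B C) g $ i $ j
      = (A ** diag_matrix (\<lambda>r. linform (column r C) g) ** transpose B) $ i $ j" for i j
  proof -
    have "slicecomb (cpd A B C) g $ i $ j = (\<Sum>k\<in>UNIV. \<Sum>r\<in>UNIV. g $ k * (A $ i $ r * B $ j $ r * C $ k $ r))"
      by (simp add: slicecomb_nth cpd_def sum_distrib_left)
    also have "\<dots> = (\<Sum>r\<in>UNIV. \<Sum>k\<in>UNIV. g $ k * (A $ i $ r * B $ j $ r * C $ k $ r))"
      by (rule sum.swap)
    also have "\<dots> = (\<Sum>r\<in>UNIV. A $ i $ r * linform (column r C) g * B $ j $ r)"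
      by (rule sum.cong) (simp_all add: linform_def column_def sum_distrib_left sum_distrib_right algebra_simps)
    also have "\<dots> = (A ** diag_matrix (\<lambda>r. linform (column r C) g) ** transpose B) $ i $ j"
      by (simp add: matrix_matrix_mult_def[of "A ** _"] matrix_mult_diag_matrix_nth transpose_def)
    finally show ?thesis .
  qed
  then show ?thesis by (simp add: vec_eq_iff)
qed

lemma charpoly_cpd:
  "charpoly (cpd A B C) g = det A * det B * (\<Prod>r\<in>UNIV. linform (column r C) g)"
  unfolding charpoly_def slicecomb_cpd det_mul det_transpose det_diag_matrix by simp

lemma slicecomb_cpd_mult_vec:
  "slicecomb (cpd A B C) g *v y = A *v (\<chi> r. linform (column r C) g * (transpose B *v y) $ r)"
  unfolding slicecomb_cpd matrix_vector_mul_assoc[symmetric] diag_matrix_mult_vec ..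

lemma rank_le_cpd:
  fixes A :: "complex ^ 'r ^ 'i::finite" and B :: "complex ^ 'r ^ 'j::finite"
    and C :: "complex ^ 'r::finite ^ 'k::finite"
  assumes "matK rK A" "matK rK B" "matK rK C"
  shows "rank_le rK (cpd A B C) CARD('r)"
proof -
  obtain h where h: "bij_betw h {..<CARD('r)} (UNIV :: 'r set)"
    using ex_bij_betw_nat_finite[of "UNIV :: 'r set"] by (auto simp: atLeast0LessThan)
  have "cpd A B C i j k = (\<Sum>n<CARD('r). A $ i $ h n * B $ j $ h n * C $ k $ h n)" for i j k
    using sum.reindex_bij_betw[OF h, of "\<lambda>r. A $ i $ r * B $ j $ r * C $ k $ r"] by (simp add: cpd_def)
  then have "cpd A B C = (\<lambda>i j k. \<Sum>n<CARD('r). A $ i $ h n * B $ j $ h n * C $ k $ h n)"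
    by (intro ext)
  then show ?thesis
    using assms unfolding rank_le_def matK_def
    by (intro exI[of _ "\<lambda>n i. A $ i $ h n"] exI[of _ "\<lambda>n j. B $ j $ h n"] exI[of _ "\<lambda>n k. C $ k $ h n"])
      simp
qed

lemma slicecomb_mult_vec_sum_rank_one:
  assumes X: "X = (\<lambda>i j k. \<Sum>r<m. a r i * b r j * c r k)"
  shows "slicecomb X g *v x
    = (\<Sum>r<m. ((\<Sum>j\<in>UNIV. b r j * x $ j) * (\<Sum>k\<in>UNIV. g $ k * c r k)) *s (\<chi> i. a r i))"
proof -
  have "(slicecomb X g *v x) $ i
      = (\<Sum>j\<in>UNIV. \<Sum>k\<in>UNIV. \<Sum>r<m. a r i * (b r j * x $ j) * (g $ k * c r k))" for i
    unfolding slicecomb_mult_vec_nth X by (simp add: sum_distrib_left sum_distrib_right mult_ac)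
  also have "\<dots> i = (\<Sum>r<m. \<Sum>j\<in>UNIV. \<Sum>k\<in>UNIV. a r i * (b r j * x $ j) * (g $ k * c r k))" for i
    by (subst sum.swap) (simp add: sum.swap[of _ "{..<m}"])
  also have "\<dots> i = (\<Sum>r<m. ((\<Sum>j\<in>UNIV. b r j * x $ j) * (\<Sum>k\<in>UNIV. g $ k * c r k)) * a r i)" for i
    unfolding sum_product by (simp add: sum_distrib_left sum_distrib_right mult_ac)
  finally show ?thesis by (simp add: vec_eq_iff sum_component)
qed

text \<open>A sum of \<open>m\<close> rank-one terms maps every vector into the real span of \<open>2m\<close> vectors
  (the first factors and \<open>\<i>\<close> times them), so an invertible slice combination forces
  \<open>2 \<cdot> CARD('n) \<le> 2m\<close>.\<close>

lemma card_le_of_rank_le: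
  fixes X :: "('n::finite, 'n, 'k::finite) tensor"
  assumes inv: "invertible (slicecomb X g)" and rank: "rank_le rK X m"
  shows "CARD('n) \<le> m"
proof -
  obtain a b c where X: "X = (\<lambda>i j k. \<Sum>r<m. a r i * b r j * c r k)"
    using rank unfolding rank_le_def by blast
  obtain Mi where Mi: "slicecomb X g ** Mi = mat 1" using inv invertible_right_inverse by blast
  define u where "u r = (\<chi> i. a r i)" for r
  define S where "S = u ` {..<m} \<union> (\<lambda>r. \<i> *s u r) ` {..<m}"
  have "card S \<le> 2 * m"
    unfolding S_def using card_Un_le[of "u ` {..<m}" "(\<lambda>r. \<i> *s u r) ` {..<m}"]
      card_image_le[of "{..<m}" u] card_image_le[of "{..<m}" "\<lambda>r. \<i> *s u r"] by simp
  have scale_in_span: "c *s v \<in> span S" if "v \<in> S" "\<i> *s v \<in> S" for c v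
  proof -
    have "c *s v = Re c *\<^sub>R v + Im c *\<^sub>R (\<i> *s v)"
      unfolding vec_eq_iff vector_add_component vector_scaleR_component vector_smult_component
      by (simp add: scaleR_conv_of_real complex_eq_iff algebra_simps)
    also have "\<dots> \<in> span S" using that by (intro span_add span_mul span_base)
    finally show ?thesis .
  qed
  have "x \<in> span S" for x :: "complex ^ 'n"
  proof -
    have "x = slicecomb X g *v (Mi *v x)" by (simp add: matrix_vector_mul_assoc Mi)
    also have "\<dots> \<in> span S"
      unfolding slicecomb_mult_vec_sum_rank_one[OF X] u_def[symmetric]
      by (rule span_sum, rule scale_in_span) (auto simp: S_def)
    finally show ?thesis .
  qed
  then have "dim (UNIV :: (complex ^ 'n) set) \<le> card S"
    by (intro real_vector.dim_le_card) (auto simp: S_def)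
  then show ?thesis using \<open>card S \<le> 2 * m\<close> by simp
qed

lemma Krank_eq_card_of_cpd:
  fixes A B :: "complex ^ 'n ^ 'n" and C :: "complex ^ 'n ^ 'k::finite"
  assumes "matK rK A" "matK rK B" "matK rK C" "invertible (slicecomb (cpd A B C) g)"
  shows "Krank rK (cpd A B C) = CARD('n)"
  unfolding Krank_def
  by (rule Least_equality) (use rank_le_cpd[OF assms(1-3)] card_le_of_rank_le[OF assms(4)] in auto)

section \<open>Characteristic polynomial and spectrum\<close>

lemma is_spectrum_nonzero:
  assumes "is_spectrum rK X L"
  shows "L r \<noteq> 0"
proof
  assume "L r = 0"
  obtain g where "vecK rK g" "charpoly X g \<noteq> 0"
    using assms unfolding is_spectrum_def by blast
  moreover have "linform (L r) g = 0" using \<open>L r = 0\<close> by (simp add: linform_def)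
  ultimately show False
    using assms unfolding is_spectrum_def by (metis UNIV_I finite_class.finite_UNIV prod_zero)
qed

lemma charpoly_scale: "charpoly X (c *s g) = c ^ CARD('n) * charpoly (X :: ('n::finite, 'n, 'k::finite) tensor) g"
proof -
  have "slicecomb X (c *s g) = (\<chi> i. c *s (slicecomb X g $ i))"
    by (simp add: vec_eq_iff slicecomb_nth sum_distrib_left mult.assoc)
  then show ?thesis
    unfolding charpoly_def by (simp add: det_rows_mul)
qed

lemma wedge_eq_0_imp_scale:
  assumes "p \<noteq> 0" "wedge p g = 0"
  shows "\<exists>c. g = c *s p"
proof -
  have q: "wedge p (cperp p) = of_real ((norm p)\<^sup>2)"
    unfolding wedge_def norm_vec2_squared of_real_add complex_norm_square by (simp add: algebra_simps)
  have "wedge p (cperp p) *s g = wedge g (cperp p) *s p"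
    using wedge_expansion[of p "cperp p" g] assms(2) by simp
  then have "g = (wedge g (cperp p) / wedge p (cperp p)) *s p"
    using assms(1) q by (simp add: vec_eq_iff field_simps)
  then show ?thesis by blast
qed

text \<open>\<open>charpoly X\<close> is homogeneous, so \<open>linform l g = 0\<close> would make \<open>g\<close> a multiple of the
  root \<open>perp l\<close>.\<close>

lemma linform_nonzero_of_charpoly:
  assumes "l \<noteq> 0" "charpoly X (perp l) = 0" "charpoly X g \<noteq> 0"
  shows "linform l g \<noteq> 0"
proof
  assume "linform l g = 0"
  moreover have "wedge (perp l) g = - linform l g" by (simp add: wedge_def linform_2)
  ultimately have "wedge (perp l) g = 0" by simp
  then obtain c where "g = c *s perp l"
    using wedge_eq_0_imp_scale assms(1) perp_eq_0_iff by blast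
  then show False using assms(2,3) by (simp add: charpoly_scale)
qed

lemma matching_of_linear_factors:
  fixes M l :: "'n::finite \<Rightarrow> complex ^ 2"
  assumes nonzero: "\<And>s. M s \<noteq> 0"
    and roots: "\<And>r. (\<Prod>s\<in>UNIV. linform (M s) (perp (l r))) = 0"
    and distinct: "\<And>r r'. r \<noteq> r' \<Longrightarrow> wedge (l r) (l r') \<noteq> 0"
  shows "\<exists>\<sigma>. bij \<sigma> \<and> (\<forall>r. wedge (M (\<sigma> r)) (l r) = 0)"
proof -
  have "\<exists>s. wedge (M s) (l r) = 0" for r
    using roots[of r] by (auto simp: linform_perp)
  then obtain \<sigma> where \<sigma>: "\<And>r. wedge (M (\<sigma> r)) (l r) = 0" by metis
  have "inj \<sigma>"
  proof (rule injI)
    fix r r' assume "\<sigma> r = \<sigma> r'"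
    then have "wedge (l r) (l r') = 0"
      using wedge_eq_0_trans[OF nonzero \<sigma>[of r]] \<sigma>[of r'] by simp
    then show "r = r'" using distinct by blast
  qed
  then show ?thesis using \<sigma> finite_UNIV_inj_surj[of \<sigma>] by (auto simp: bij_def)
qed

lemma md_le:
  assumes "bij \<pi>" "\<And>r. chordal (L1 r) (L2 (\<pi> r)) \<le> b"
  shows "md L1 L2 \<le> b"
proof -
  have "\<pi> permutes UNIV" by (rule bij_imp_permutes) (use assms(1) in auto)
  then have "md L1 L2 \<le> Max ((\<lambda>r. chordal (L1 r) (L2 (\<pi> r))) ` UNIV)"
    unfolding md_def by (intro Min_le) (auto simp: finite_permutations)
  also have "\<dots> \<le> b" using assms(2) by (simp add: Max_le_iff)
  finally show ?thesis .
qed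

lemma simple_tensor_cpd:
  fixes A B :: "complex ^ 'n ^ 'n" and C :: "complex ^ 'n ^ 2"
  assumes K: "matK rK A" "matK rK B" "matK rK C" and gK: "vecK rK g"
    and g: "charpoly (cpd A B C) g \<noteq> 0"
    and distinct: "\<And>r s. r \<noteq> s \<Longrightarrow> wedge (column r C) (column s C) \<noteq> 0"
  shows "simple_tensor rK (cpd A B C)"
proof -
  define \<kappa> where "\<kappa> = det A * det B"
  have \<kappa>: "\<kappa> \<noteq> 0" "inK rK \<kappa>"
    using g K by (auto simp: \<kappa>_def charpoly_cpd det_inK inK_intros)
  obtain r0 :: 'n where True by blast
  define L where "L r = (if r = r0 then \<kappa> *s column r C else column r C)" for r
  have "vecK rK (L r)" for r
    using K(3) \<kappa>(2) by (auto simp: L_def vecK_def matK_def column_def intro: inK_intros)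
  moreover have "charpoly (cpd A B C) \<gamma> = (\<Prod>r\<in>UNIV. linform (L r) \<gamma>)" for \<gamma>
  proof -
    have "(\<Prod>r\<in>UNIV. linform (L r) \<gamma>) = linform (L r0) \<gamma> * (\<Prod>r\<in>UNIV - {r0}. linform (L r) \<gamma>)"
      by (rule prod.remove) auto
    also have "\<dots> = \<kappa> * (linform (column r0 C) \<gamma> * (\<Prod>r\<in>UNIV - {r0}. linform (column r C) \<gamma>))"
      by (simp add: L_def linform_scale)
    also have "\<dots> = \<kappa> * (\<Prod>r\<in>UNIV. linform (column r C) \<gamma>)"
      by (simp add: prod.remove[of UNIV r0])
    finally show ?thesis by (simp add: charpoly_cpd \<kappa>_def)
  qed
  moreover have "\<not> proportional (L r) (L s)" if "r \<noteq> s" for r s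
  proof -
    have "wedge (L r) (L s)
        = (if r = r0 then \<kappa> else 1) * (if s = r0 then \<kappa> else 1) * wedge (column r C) (column s C)"
      by (simp add: L_def wedge_scale_left wedge_scale_right)
    also have "\<dots> \<noteq> 0" using distinct[OF that] \<kappa>(1) by simp
    finally show ?thesis using proportional_imp_wedge_eq_0 by blast
  qed
  moreover have "invertible (slicecomb (cpd A B C) g)"
    using g by (simp add: charpoly_def invertible_det_nz)
  ultimately show ?thesis
    unfolding simple_tensor_def using gK by blast
qed

lemma chordal_cong:
  fixes u u' v v' :: "complex ^ 2"
  assumes "u \<noteq> 0" "u' \<noteq> 0" "v \<noteq> 0" "v' \<noteq> 0" "wedge u u' = 0" "wedge v v' = 0"
  shows "chordal u v = chordal u' v'"
  using chordal_cong_left[OF assms(1-3,5)] chordal_cong_right[OF assms(2-4,6)] by simp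

lemma Min_chordal_le:
  fixes L :: "'n::finite \<Rightarrow> complex ^ 2"
  assumes "i \<noteq> j"
  shows "Min {chordal (L i) (L j) |i j. i \<noteq> j} \<le> chordal (L i) (L j)"
proof (rule Min_le)
  have "{chordal (L i) (L j) |i j. i \<noteq> j} \<subseteq> (\<lambda>(i, j). chordal (L i) (L j)) ` UNIV" by auto
  then show "finite {chordal (L i) (L j) |i j. i \<noteq> j}" by (rule finite_subset) simp
qed (use assms in blast)

lemma spectrum_of_cpd:
  fixes A B :: "complex ^ 'n ^ 'n" and C :: "complex ^ 'n ^ 2" and L :: "'n::finite \<Rightarrow> complex ^ 2"
  assumes spectrum: "is_spectrum rK (cpd A B C) L" and columns: "\<And>r. column r C \<noteq> 0"
    and pos: "0 < Min {chordal (L i) (L j) |i j. i \<noteq> j}"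
  obtains \<tau> where "bij \<tau>" "\<And>i. wedge (column (\<tau> i) C) (L i) = 0"
    "\<And>r s. r \<noteq> s \<Longrightarrow> Min {chordal (L i) (L j) |i j. i \<noteq> j} \<le> chordal (column r C) (column s C)"
proof -
  have L: "L i \<noteq> 0" for i by (rule is_spectrum_nonzero[OF spectrum])
  have distinct: "wedge (L i) (L j) \<noteq> 0" if "i \<noteq> j" for i j
  proof -
    have "0 < chordal (L i) (L j)" using Min_chordal_le[OF that, of L] pos by linarith
    then show ?thesis using chordal_eq_0_iff[OF L L, of i j] by simp
  qed
  obtain g where "charpoly (cpd A B C) g \<noteq> 0"
    using spectrum unfolding is_spectrum_def by blast
  then have det: "det A * det B \<noteq> 0" by (auto simp: charpoly_cpd)
  have "(\<Prod>s\<in>UNIV. linform (column s C) (perp (L i))) = 0" for i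
  proof -
    have "charpoly (cpd A B C) (perp (L i)) = (\<Prod>s\<in>UNIV. linform (L s) (perp (L i)))"
      using spectrum vecK_perp unfolding is_spectrum_def by blast
    also have "\<dots> = 0"
      by (rule prod_zero) (simp_all add: linform_perp, metis wedge_self)
    finally show ?thesis using det by (simp add: charpoly_cpd)
  qed
  then obtain \<tau> where "bij \<tau>" and \<tau>: "\<And>i. wedge (column (\<tau> i) C) (L i) = 0"
    using matching_of_linear_factors[where M = "\<lambda>s. column s C" and l = L, OF columns _ distinct] by blast
  moreover have "Min {chordal (L i) (L j) |i j. i \<noteq> j} \<le> chordal (column r C) (column s C)" if "r \<noteq> s" for r s
  proof -
    obtain i j where "r = \<tau> i" "s = \<tau> j"
      using \<open>bij \<tau>\<close> by (metis bij_pointE)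
    then show ?thesis
      using Min_chordal_le[of i j L] chordal_cong[OF columns L columns L \<tau> \<tau>] that by auto
  qed
  ultimately show ?thesis using that by blast
qed

section \<open>Regular pencils with distinct root lines\<close>

lemma eigenvectors_independent:
  fixes M :: "complex ^ 'n ^ 'n" and y :: "'a \<Rightarrow> complex ^ 'n"
  assumes eig: "\<And>r. M *v y r = \<mu> r *s y r" and nonzero: "\<And>r. y r \<noteq> 0" and "inj \<mu>"
  shows "finite S \<Longrightarrow> (\<Sum>r\<in>S. c r *s y r) = 0 \<Longrightarrow> \<forall>r\<in>S. c r = 0"
proof (induction S arbitrary: c rule: finite_induct)
  case (insert s S)
  define v where "v = (\<Sum>r\<in>S. c r *s y r)"
  have v: "v = - (c s *s y s)"
    using insert.prems insert.hyps unfolding v_def by (simp add: eq_neg_iff_add_eq_0 add.commute)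
  have "M *v v = (\<Sum>r\<in>S. (c r * \<mu> r) *s y r)"
    unfolding v_def linear_sum[OF matrix_vector_mul_linear]
    by (simp add: o_def vector_scalar_commute eig)
  then have "(\<Sum>r\<in>S. (c r * (\<mu> r - \<mu> s)) *s y r) = M *v v - \<mu> s *s v"
    unfolding v_def by (simp add: vec_eq_iff sum_component sum_distrib_left sum_subtractf[symmetric] algebra_simps)
  also have "\<dots> = 0"
    unfolding v linear_neg[OF matrix_vector_mul_linear] vector_scalar_commute eig
    by (simp add: vec_eq_iff)
  finally have "\<forall>r\<in>S. c r * (\<mu> r - \<mu> s) = 0"
    by (rule insert.IH)
  moreover have "\<mu> r \<noteq> \<mu> s" if "r \<in> S" for r
    using that insert.hyps(2) \<open>inj \<mu>\<close> by (auto dest: injD)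
  ultimately have rest: "\<forall>r\<in>S. c r = 0" by simp
  then have "c s *s y s = 0" using v by (simp add: v_def)
  then show ?case using rest nonzero scale_eq_0_iff by auto
qed simp

lemma slicecomb_axis: "slicecomb X (axis k 1) = slice X k"
  unfolding vec_eq_iff slicecomb_nth slice_def axis_def
  by (simp add: if_distrib[of "\<lambda>x. x * _"] cong: if_cong)

lemma slicecomb_2_mult_vec:
  "slicecomb (W :: ('n::finite, 'n, 2) tensor) h *v y = h $ 1 *s (slice W 1 *v y) + h $ 2 *s (slice W 2 *v y)"
  by (simp add: vec_eq_iff slicecomb_nth matrix_vector_mult_def slice_def sum_2
      sum.distrib sum_distrib_left sum_distrib_right algebra_simps)

lemma slicecomb_mult_kernel_vector:
  fixes W :: "('n::finite, 'n, 2) tensor"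
  assumes ker: "slicecomb W (perp l) *v y = 0" and lam: "linform l g \<noteq> 0"
  shows "slicecomb W h *v y = linform l h *s ((1 / linform l g) *s (slicecomb W g *v y))"
proof -
  define v where "v k = slice W k *v y" for k
  have ker_i: "- l $ 2 * v 1 $ i + l $ 1 * v 2 $ i = 0" for i
    using ker unfolding slicecomb_2_mult_vec v_def by (simp add: vec_eq_iff)
  have "(h $ 1 * v 1 $ i + h $ 2 * v 2 $ i) * linform l g
      = linform l h * (g $ 1 * v 1 $ i + g $ 2 * v 2 $ i)" for i
    using ker_i[of i] unfolding linform_2 by algebra
  then show ?thesis
    using lam unfolding slicecomb_2_mult_vec v_def[symmetric] by (simp add: vec_eq_iff field_simps)
qed

lemma charpoly_zero: "charpoly X 0 = 0"
  using charpoly_scale[of X 0 0] by (simp add: power_0_left)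

text \<open>The kernel vectors \<open>y r\<close> at the roots are eigenvectors of \<open>W\<^sub>g\<^sup>-\<^sup>1 W\<^sub>e\<close>, \<open>e = cperp g\<close>,
  for the pairwise distinct eigenvalues \<open>linform (l r) e / linform (l r) g\<close>.\<close>

lemma invertible_pencil_eigenbasis:
  fixes W :: "('n::finite, 'n, 2) tensor" and y a :: "'n \<Rightarrow> complex ^ 'n"
  assumes g: "charpoly W g \<noteq> 0" and lam: "\<And>r. linform (l r) g \<noteq> 0"
    and Wy: "\<And>h r. slicecomb W h *v y r = linform (l r) h *s a r"
    and nonzero: "\<And>r. y r \<noteq> 0"
    and distinct: "\<And>r s. r \<noteq> s \<Longrightarrow> wedge (l r) (l s) \<noteq> 0"
  shows "invertible (\<chi> j r. y r $ j)"
proof -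
  obtain Ni where Ni: "Ni ** slicecomb W g = mat 1"
    using g invertible_det_nz invertible_left_inverse unfolding charpoly_def by blast
  define e where "e = cperp g"
  define \<mu> where "\<mu> r = linform (l r) e / linform (l r) g" for r
  have "wedge e g = - of_real ((norm g)\<^sup>2)"
    unfolding e_def wedge_def norm_vec2_squared of_real_add complex_norm_square by (simp add: algebra_simps)
  moreover have "g \<noteq> 0" using g charpoly_zero by auto
  ultimately have e: "wedge e g \<noteq> 0" by simp
  have inj: "inj \<mu>"
  proof (rule injI, rule ccontr)
    fix r s assume "\<mu> r = \<mu> s" "r \<noteq> s"
    then have "linform (l r) e * linform (l s) g - linform (l s) e * linform (l r) g = 0"
      using lam[of r] lam[of s] by (simp add: \<mu>_def field_simps)
    then show False
      unfolding wedge_linform_identity using distinct[OF \<open>r \<noteq> s\<close>] e by simp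
  qed
  have eig: "(Ni ** slicecomb W e) *v y r = \<mu> r *s y r" for r
  proof -
    have "slicecomb W e *v y r = \<mu> r *s (slicecomb W g *v y r)"
      using lam[of r] by (simp add: Wy \<mu>_def vec_eq_iff)
    then have "(Ni ** slicecomb W e) *v y r = \<mu> r *s ((Ni ** slicecomb W g) *v y r)"
      by (simp add: matrix_vector_mul_assoc[symmetric] vector_scalar_commute)
    then show ?thesis by (simp add: Ni)
  qed
  have "(\<Sum>r\<in>UNIV. c r *s y r) = 0 \<Longrightarrow> \<forall>r\<in>UNIV. c r = 0" for c
    by (rule eigenvectors_independent[OF eig nonzero inj finite_class.finite_UNIV])
  moreover have "column r (\<chi> j r. y r $ j) = y r" for r
    by (simp add: column_def)
  ultimately have "\<exists>B. B ** (\<chi> j r. y r $ j) = mat 1"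
    unfolding matrix_left_invertible_independent_columns by auto
  then show ?thesis
    unfolding invertible_left_inverse .
qed

lemma cpd_of_pencil_eigenbasis:
  fixes W :: "('n::finite, 'n, 2) tensor" and y a :: "'n \<Rightarrow> complex ^ 'n"
  assumes Yi: "(\<chi> j r. y r $ j) ** Yi = mat 1"
    and Wy: "\<And>h r. slicecomb W h *v y r = linform (l r) h *s a r"
  shows "W = cpd (\<chi> i r. a r $ i) (transpose Yi) (\<chi> k r. l r $ k)"
proof (intro ext)
  fix i j k
  have slice: "(slice W k ** (\<chi> j r. y r $ j)) $ i $ r = l r $ k * a r $ i" for r
  proof -
    have "(slice W k ** (\<chi> j r. y r $ j)) $ i $ r = (slicecomb W (axis k 1) *v y r) $ i"
      by (simp add: slicecomb_axis matrix_matrix_mult_def matrix_vector_mult_def)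
    also have "\<dots> = l r $ k * a r $ i"
      unfolding Wy linform_def axis_def by (simp add: if_distrib[of "\<lambda>x. _ * x"] cong: if_cong)
    finally show ?thesis .
  qed
  have "W i j k = ((slice W k ** (\<chi> j r. y r $ j)) ** Yi) $ i $ j"
    by (simp add: matrix_mul_assoc[symmetric] Yi slice_def)
  also have "\<dots> = cpd (\<chi> i r. a r $ i) (transpose Yi) (\<chi> k r. l r $ k) i j k"
    unfolding matrix_matrix_mult_def[of "_ ** _"] by (simp add: slice cpd_def transpose_def mult_ac)
  finally show "W i j k = cpd (\<chi> i r. a r $ i) (transpose Yi) (\<chi> k r. l r $ k) i j k" .
qed

lemma cpd_of_distinct_pencil_roots:
  fixes W :: "('n::finite, 'n, 2) tensor" and l :: "'n \<Rightarrow> complex ^ 2"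
  assumes WK: "tensorK rK W" and gK: "vecK rK g" and g: "charpoly W g \<noteq> 0"
    and lK: "\<And>r. vecK rK (l r)" and nonzero: "\<And>r. l r \<noteq> 0"
    and roots: "\<And>r. charpoly W (perp (l r)) = 0"
    and distinct: "\<And>r s. r \<noteq> s \<Longrightarrow> wedge (l r) (l s) \<noteq> 0"
  shows "\<exists>A B. matK rK A \<and> matK rK B \<and> W = cpd A B (\<chi> k r. l r $ k)"
proof -
  have lam: "linform (l r) g \<noteq> 0" for r
    using linform_nonzero_of_charpoly[OF nonzero roots g] .
  have "\<exists>y. vecK rK y \<and> y \<noteq> 0 \<and> slicecomb W (perp (l r)) *v y = 0" for r
    using kernel_vecK_of_det_eq_0[OF matK_slicecomb[OF WK vecK_perp[OF lK]]] roots
    by (simp add: charpoly_def)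
  then obtain y where y: "\<And>r. vecK rK (y r)" "\<And>r. y r \<noteq> 0"
    "\<And>r. slicecomb W (perp (l r)) *v y r = 0"
    by metis
  define a where "a r = (1 / linform (l r) g) *s (slicecomb W g *v y r)" for r
  have Wy: "slicecomb W h *v y r = linform (l r) h *s a r" for h r
    unfolding a_def by (rule slicecomb_mult_kernel_vector[OF y(3) lam])
  have aK: "inK rK (a r $ i)" for r i
  proof -
    have "inK rK ((slicecomb W g *v y r) $ i)"
      using matK_slicecomb[OF WK gK] y(1)
      unfolding matrix_vector_mult_def matK_def vecK_def by (auto intro!: inK_intros)
    then show ?thesis
      unfolding a_def vector_smult_component using inK_linform[OF lK gK] by (intro inK_intros)
  qed
  have "invertible (\<chi> j r. y r $ j)"
    by (rule invertible_pencil_eigenbasis[OF g lam Wy y(2) distinct])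
  then obtain Yi where Yi: "(\<chi> j r. y r $ j) ** Yi = mat 1"
    unfolding invertible_right_inverse by blast
  have "matK rK (transpose Yi)"
    using matK_right_inverse[OF _ Yi] y(1) by (auto simp: matK_def vecK_def transpose_def)
  moreover have "matK rK (\<chi> i r. a r $ i)" using aK by (simp add: matK_def)
  ultimately show ?thesis
    using cpd_of_pencil_eigenbasis[OF Yi Wy] by blast
qed

section \<open>Persistence of roots\<close>

lemma nonvanishing_imp_same_sign:
  fixes f :: "real \<Rightarrow> real"
  assumes "a \<le> b" "continuous_on {a..b} f" "\<And>x. a \<le> x \<Longrightarrow> x \<le> b \<Longrightarrow> f x \<noteq> 0"
  shows "f a * f b > 0"
proof (rule ccontr)
  assume "\<not> f a * f b > 0"
  then have "f a \<le> 0 \<and> 0 \<le> f b \<or> f b \<le> 0 \<and> 0 \<le> f a"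
    by (auto simp: mult_le_0_iff not_less)
  then obtain x where "a \<le> x" "x \<le> b" "f x = 0"
    using IVT'[of f a 0 b] IVT2'[of f b 0 a] assms(1,2) by blast
  then show False using assms(3) by blast
qed

lemma real_root_persists:
  fixes G :: "real \<Rightarrow> real \<Rightarrow> real"
  assumes "0 \<le> \<rho>"
    and cont_t: "\<And>u. continuous_on {0..1} (\<lambda>t. G t u)"
    and cont_u: "continuous_on {-\<rho>..\<rho>} (G 1)"
    and boundary: "\<And>t u. 0 \<le> t \<Longrightarrow> t \<le> 1 \<Longrightarrow> \<bar>u\<bar> = \<rho> \<Longrightarrow> G t u \<noteq> 0"
    and sign_change: "G 0 (- \<rho>) * G 0 \<rho> < 0"
  shows "\<exists>u. - \<rho> \<le> u \<and> u \<le> \<rho> \<and> G 1 u = 0"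
proof (rule ccontr)
  assume no_root: "\<not> ?thesis"
  have same: "G 0 u * G 1 u > 0" if "\<bar>u\<bar> = \<rho>" for u
    by (rule nonvanishing_imp_same_sign[OF _ cont_t]) (use boundary that in auto)
  have "G 1 (- \<rho>) * G 1 \<rho> > 0"
    by (rule nonvanishing_imp_same_sign[OF _ cont_u]) (use no_root \<open>\<rho> \<ge> 0\<close> in auto)
  moreover have "(G 0 (- \<rho>) * G 1 (- \<rho>)) * (G 0 \<rho> * G 1 \<rho>) > 0"
    using same[of "- \<rho>"] same[of \<rho>] \<open>\<rho> \<ge> 0\<close> by simp
  ultimately have "(G 0 (- \<rho>) * G 0 \<rho>) * (G 1 (- \<rho>) * G 1 \<rho>) > 0"
    by (simp add: mult_ac)
  then show False
    using mult_neg_pos[OF sign_change \<open>G 1 (- \<rho>) * G 1 \<rho> > 0\<close>] by simp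
qed

lemma minimum_modulus_cball:
  fixes f :: "complex \<Rightarrow> complex"
  assumes "\<rho> > 0" and cont: "continuous_on (cball 0 \<rho>) f" and hol: "f holomorphic_on ball 0 \<rho>"
    and nonzero: "\<And>z. z \<in> cball 0 \<rho> \<Longrightarrow> f z \<noteq> 0"
    and boundary: "\<And>z. cmod z = \<rho> \<Longrightarrow> \<mu> \<le> cmod (f z)" and "\<mu> > 0"
    and z: "z \<in> cball 0 \<rho>"
  shows "\<mu> \<le> cmod (f z)"
proof -
  have "norm (inverse (f z)) \<le> inverse \<mu>"
  proof (rule maximum_modulus_frontier[of "\<lambda>z. inverse (f z)" "cball 0 \<rho>"])
    show "(\<lambda>z. inverse (f z)) holomorphic_on interior (cball 0 \<rho>)"
      using hol nonzero by (auto intro!: holomorphic_on_inverse)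
    show "continuous_on (closure (cball 0 \<rho>)) (\<lambda>z. inverse (f z))"
      using cont nonzero by (auto intro!: continuous_on_inverse)
    show "norm (inverse (f w)) \<le> inverse \<mu>" if "w \<in> frontier (cball 0 \<rho>)" for w
    proof -
      have "\<mu> \<le> cmod (f w)" using that boundary \<open>\<rho> > 0\<close> by (simp add: dist_norm)
      then show ?thesis using \<open>\<mu> > 0\<close> by (simp add: norm_inverse le_imp_inverse_le)
    qed
  qed (use z in auto)
  then show ?thesis
    using nonzero[OF z] \<open>\<mu> > 0\<close> by (simp add: norm_inverse inverse_le_iff_le)
qed

lemma zero_in_ball_of_small_value:
  fixes f :: "complex \<Rightarrow> complex"
  assumes "\<rho> > 0" and cont: "continuous_on (cball 0 \<rho>) f" and hol: "f holomorphic_on ball 0 \<rho>"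
    and boundary: "\<And>z. cmod z = \<rho> \<Longrightarrow> \<mu> \<le> cmod (f z)"
    and z0: "cmod z0 \<le> \<rho>" and small: "cmod (f z0) < \<mu>"
  shows "\<exists>z. cmod z < \<rho> \<and> f z = 0"
proof -
  have "\<mu> > 0" using small norm_ge_zero[of "f z0"] by linarith
  have "\<exists>z\<in>cball 0 \<rho>. f z = 0"
  proof (rule ccontr)
    assume "\<not> ?thesis"
    then have "\<mu> \<le> cmod (f z0)"
      using minimum_modulus_cball[OF \<open>\<rho> > 0\<close> cont hol _ boundary \<open>\<mu> > 0\<close>, of z0] z0 by auto
    then show False using small by simp
  qed
  then obtain z where "cmod z \<le> \<rho>" "f z = 0" by auto
  moreover have "cmod z \<noteq> \<rho>" using boundary \<open>f z = 0\<close> \<open>\<mu> > 0\<close> by force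
  ultimately show ?thesis by (auto simp: order.order_iff_strict)
qed

lemma compact_nonvanishing_imp_bounded_below:
  fixes f :: "'a::topological_space \<Rightarrow> 'b::real_normed_vector"
  assumes "compact K" "continuous_on K f" "\<And>x. x \<in> K \<Longrightarrow> f x \<noteq> 0"
  obtains \<mu> where "\<mu> > 0" "\<And>x. x \<in> K \<Longrightarrow> \<mu> \<le> norm (f x)"
proof (cases "K = {}")
  case False
  obtain x0 where "x0 \<in> K" "\<forall>x\<in>K. norm (f x0) \<le> norm (f x)"
    using continuous_attains_inf[OF assms(1) False continuous_on_norm[OF assms(2)]] by blast
  then show ?thesis using that[of "norm (f x0)"] assms(3) by auto
qed (use that[of 1] in auto)

lemma holomorphic_family_moduli:
  fixes F :: "real \<Rightarrow> complex \<Rightarrow> complex"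
  assumes cont: "continuous_on ({0..1} \<times> cball 0 \<rho>) (\<lambda>p. F (fst p) (snd p))"
    and boundary: "\<And>t z. 0 \<le> t \<Longrightarrow> t \<le> 1 \<Longrightarrow> cmod z = \<rho> \<Longrightarrow> F t z \<noteq> 0"
  obtains \<mu> \<eta> where "\<mu> > 0" "\<eta> > 0"
    "\<And>t z. 0 \<le> t \<Longrightarrow> t \<le> 1 \<Longrightarrow> cmod z = \<rho> \<Longrightarrow> \<mu> \<le> cmod (F t z)"
    "\<And>t t' z. t \<in> {0..1} \<Longrightarrow> t' \<in> {0..1} \<Longrightarrow> cmod z \<le> \<rho> \<Longrightarrow> \<bar>t' - t\<bar> < \<eta> \<Longrightarrow>
      cmod (F t' z - F t z) < \<mu>"
proof -
  define F' where "F' p = F (fst p) (snd p)" for p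
  obtain \<mu> where \<mu>: "\<mu> > 0" "\<And>p. p \<in> {0..1} \<times> sphere 0 \<rho> \<Longrightarrow> \<mu> \<le> cmod (F' p)"
  proof (rule compact_nonvanishing_imp_bounded_below)
    show "compact ({0..1::real} \<times> sphere (0::complex) \<rho>)"
      by (intro compact_Times compact_Icc compact_sphere)
    show "continuous_on ({0..1} \<times> sphere 0 \<rho>) F'"
      by (rule continuous_on_subset[OF cont[folded F'_def]]) auto
  qed (use boundary in \<open>auto simp: F'_def\<close>)
  have "uniformly_continuous_on ({0..1} \<times> cball 0 \<rho>) F'"
    by (rule compact_uniformly_continuous[OF cont[folded F'_def]]) (intro compact_Times compact_Icc compact_cball)
  then obtain \<eta> where \<eta>: "\<eta> > 0" "\<And>p p'. p \<in> {0..1} \<times> cball 0 \<rho> \<Longrightarrow> p' \<in> {0..1} \<times> cball 0 \<rho> \<Longrightarrow>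
      dist p' p < \<eta> \<Longrightarrow> dist (F' p') (F' p) < \<mu>"
    unfolding uniformly_continuous_on_def using \<mu>(1) by metis
  show ?thesis
  proof (rule that[OF \<mu>(1) \<eta>(1)])
    show "\<mu> \<le> cmod (F t z)" if "0 \<le> t" "t \<le> 1" "cmod z = \<rho>" for t z
      using \<mu>(2)[of "(t, z)"] that by (simp add: F'_def)
    show "cmod (F t' z - F t z) < \<mu>"
      if "t \<in> {0..1}" "t' \<in> {0..1}" "cmod z \<le> \<rho>" "\<bar>t' - t\<bar> < \<eta>" for t t' z
    proof -
      have "(t, z) \<in> {0..1} \<times> cball 0 \<rho>" "(t', z) \<in> {0..1} \<times> cball 0 \<rho>"
        using that(1-3) by auto
      moreover have "dist (t', z) (t, z) < \<eta>"
        using that(4) by (simp add: dist_Pair_Pair dist_real_def)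
      ultimately have "dist (F' (t', z)) (F' (t, z)) < \<mu>"
        by (rule \<eta>(2))
      then show ?thesis by (simp add: F'_def dist_norm)
    qed
  qed
qed

text \<open>Along a fine enough subdivision of \<open>[0, 1]\<close>, the minimum modulus principle carries a
  zero from one parameter to the next.\<close>

lemma holomorphic_root_persists:
  fixes F :: "real \<Rightarrow> complex \<Rightarrow> complex"
  assumes cont: "continuous_on ({0..1} \<times> cball 0 \<rho>) (\<lambda>p. F (fst p) (snd p))"
    and hol: "\<And>t. 0 \<le> t \<Longrightarrow> t \<le> 1 \<Longrightarrow> F t holomorphic_on ball 0 \<rho>"
    and boundary: "\<And>t z. 0 \<le> t \<Longrightarrow> t \<le> 1 \<Longrightarrow> cmod z = \<rho> \<Longrightarrow> F t z \<noteq> 0"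
    and root: "cmod z0 < \<rho>" "F 0 z0 = 0"
  shows "\<exists>z. cmod z < \<rho> \<and> F 1 z = 0"
proof (rule holomorphic_family_moduli[OF cont boundary])
  fix \<mu> \<eta> :: real
  assume "\<eta> > 0" and \<mu>: "\<And>t z. 0 \<le> t \<Longrightarrow> t \<le> 1 \<Longrightarrow> cmod z = \<rho> \<Longrightarrow> \<mu> \<le> cmod (F t z)"
    and \<eta>: "\<And>t t' z. t \<in> {0..1} \<Longrightarrow> t' \<in> {0..1} \<Longrightarrow> cmod z \<le> \<rho> \<Longrightarrow> \<bar>t' - t\<bar> < \<eta> \<Longrightarrow>
      cmod (F t' z - F t z) < \<mu>"
  have "\<rho> > 0" using root(1) by (meson le_less_trans norm_ge_zero)
  obtain N :: nat where N: "N > 0" "inverse (real N) < \<eta>"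
    using ex_inverse_of_nat_less[OF \<open>\<eta> > 0\<close>] by blast
  have "\<exists>z. cmod z < \<rho> \<and> F (real k / real N) z = 0" if "k \<le> N" for k
    using that
  proof (induction k)
    case 0
    then show ?case using root by auto
  next
    case (Suc k)
    then obtain z0 where z0: "cmod z0 < \<rho>" "F (real k / real N) z0 = 0" by auto
    define t where "t = real k / real N"
    define t' where "t' = real (Suc k) / real N"
    have t: "t \<in> {0..1}" "t' \<in> {0..1}"
      using Suc.prems N by (auto simp: t_def t'_def field_simps)
    have "\<bar>t' - t\<bar> = inverse (real N)"
      using N by (simp add: t_def t'_def diff_divide_distrib[symmetric] divide_inverse algebra_simps)
    then have "cmod (F t' z0 - F t z0) < \<mu>"
      using \<eta>[OF t, of z0] z0(1) N(2) by simp
    then have small: "cmod (F t' z0) < \<mu>"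
      using z0(2) by (simp add: t_def)
    have "continuous_on (cball 0 \<rho>) (\<lambda>z. F (fst (t', z)) (snd (t', z)))"
      by (rule continuous_on_compose2[OF cont]) (use t in \<open>auto intro!: continuous_intros\<close>)
    then have "\<exists>z. cmod z < \<rho> \<and> F t' z = 0"
      using zero_in_ball_of_small_value[OF \<open>\<rho> > 0\<close> _ hol _ _ small] \<mu> t z0(1) by simp
    then show ?case unfolding t'_def .
  qed
  from this[of N] show "\<exists>z. cmod z < \<rho> \<and> F 1 z = 0" using N by auto
qed

section \<open>Perturbation of a CPD\<close>

lemma continuous_on_det:
  fixes M :: "'a::topological_space \<Rightarrow> complex ^ 'n ^ 'n"
  assumes "\<And>i j. continuous_on S (\<lambda>x. M x $ i $ j)"
  shows "continuous_on S (\<lambda>x. det (M x))"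
  unfolding det_def by (intro continuous_intros assms)

lemma holomorphic_on_det:
  fixes M :: "complex \<Rightarrow> complex ^ 'n ^ 'n"
  assumes "\<And>i j. (\<lambda>x. M x $ i $ j) holomorphic_on S"
  shows "(\<lambda>x. det (M x)) holomorphic_on S"
  unfolding det_def by (intro holomorphic_intros assms)

lemma norm_slicecomb_cpd_ge:
  fixes A B :: "complex ^ 'n ^ 'n" and C :: "complex ^ 'n ^ 'k::finite"
  assumes "invertible B"
  obtains s where
    "sigma_min A * sigma_min B * cmod (linform (column s C) g) * norm y \<le> norm (slicecomb (cpd A B C) g *v y)"
proof -
  define f where "f r = cmod (linform (column r C) g)" for r
  have "Min (range f) \<in> range f" by (intro Min_in) auto
  then obtain s where "Min (range f) = f s" by blast
  moreover have "Min (range f) \<le> f r" for r by (intro Min_le) auto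
  ultimately have s: "f s \<le> f r" for r by simp
  define u where "u = (\<chi> r. linform (column r C) g * (transpose B *v y) $ r)"
  have "f s * norm (transpose B *v y) \<le> norm u"
    by (rule mult_norm_le_componentwise) (simp_all add: u_def f_def norm_mult mult_right_mono s[unfolded f_def])
  moreover have "sigma_min B * norm y \<le> norm (transpose B *v y)"
    by (rule sigma_min_mult_norm_le_transpose[OF assms])
  ultimately have "f s * (sigma_min B * norm y) \<le> norm u"
    using mult_left_mono[of "sigma_min B * norm y" "norm (transpose B *v y)" "f s"] by (simp add: f_def)
  then have "sigma_min A * (f s * (sigma_min B * norm y)) \<le> sigma_min A * norm u"
    using sigma_min_nonneg[of A] by (simp add: mult_left_mono)
  also have "\<dots> \<le> norm (slicecomb (cpd A B C) g *v y)"
    unfolding slicecomb_cpd_mult_vec u_def[symmetric] by (rule sigma_min_mult_norm_le)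
  finally show ?thesis by (intro that[of s]) (simp add: f_def mult_ac)
qed

text \<open>For a kernel vector \<open>y\<close> of \<open>T\<^sub>\<gamma> - t E\<^sub>\<gamma>\<close>, the norm \<open>\<parallel>T\<^sub>\<gamma> y\<parallel> = t \<parallel>E\<^sub>\<gamma> y\<parallel>\<close> is bounded
  above by the spectral norm of \<open>E\<close> and below through \<open>T\<^sub>\<gamma> = A diag(C\<^sup>T \<gamma>) B\<^sup>T\<close>.\<close>

lemma root_near_column:
  fixes A B :: "complex ^ 'n ^ 'n" and C :: "complex ^ 'n ^ 2" and E :: "('n::finite, 'n, 2) tensor"
  assumes TK: "tensorK rK (cpd A B C)" and EK: "tensorK rK E"
    and B: "invertible B" and unit: "\<And>r. norm (column r C) = 1"
    and t: "0 \<le> t" "t \<le> 1" and lK: "vecK rK l" and "l \<noteq> 0"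
    and root: "charpoly (\<lambda>i j k. cpd A B C i j k - of_real t * E i j k) (perp l) = 0"
  shows "\<exists>s. sigma_min A * sigma_min B * chordal (column s C) l \<le> spnorm rK E"
proof -
  define g where "g = perp l"
  have gK: "vecK rK g" using vecK_perp[OF lK] by (simp add: g_def)
  have XK: "tensorK rK (\<lambda>i j k. cpd A B C i j k - of_real t * E i j k)"
    using TK EK by (auto simp: tensorK_def intro!: inK_intros)
  obtain y where y: "vecK rK y" "y \<noteq> 0" "slicecomb (\<lambda>i j k. cpd A B C i j k - of_real t * E i j k) g *v y = 0"
    using kernel_vecK_of_det_eq_0[OF matK_slicecomb[OF XK gK]] root by (auto simp: charpoly_def g_def)
  obtain s where lower:
    "sigma_min A * sigma_min B * cmod (linform (column s C) g) * norm y \<le> norm (slicecomb (cpd A B C) g *v y)"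
    using norm_slicecomb_cpd_ge[OF B] by blast
  have "slicecomb (cpd A B C) g *v y = t *\<^sub>R (slicecomb E g *v y)"
    using y(3) unfolding vec_eq_iff vector_scaleR_component
    by (simp add: slicecomb_mult_vec_nth scaleR_conv_of_real sum_distrib_left sum_subtractf algebra_simps)
  then have "norm (slicecomb (cpd A B C) g *v y) = t * norm (slicecomb E g *v y)"
    using t by simp
  also have "\<dots> \<le> norm (slicecomb E g *v y)"
    using t by (simp add: mult_left_le_one_le)
  also have "\<dots> \<le> spnorm rK E * norm l * norm y"
    using norm_slicecomb_le_spnorm[OF EK gK y(1)] by (simp add: g_def norm_perp)
  finally have "sigma_min A * sigma_min B * chordal (column s C) l * norm l * norm y \<le> spnorm rK E * norm l * norm y"
    using lower cmod_linform_perp[OF unit \<open>l \<noteq> 0\<close>] by (simp add: g_def mult_ac)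
  then show ?thesis using \<open>l \<noteq> 0\<close> y(2) by (auto simp: mult.assoc)
qed

locale cpd_perturbation =
  fixes realK :: bool
    and W :: "('n::finite, 'n, 2) tensor"
    and A B :: "complex ^ 'n ^ 'n"
    and C :: "complex ^ 'n ^ 2"
    and \<delta> :: real
  assumes card: "CARD('n) \<ge> 2"
    and TK: "tensorK realK (cpd A B C)" and WK: "tensorK realK W"
    and AK: "matK realK A" and BK: "matK realK B" and CK: "matK realK C"
    and unit: "\<And>r. norm (column r C) = 1"
    and separated: "\<And>r s. r \<noteq> s \<Longrightarrow> \<delta> \<le> chordal (column r C) (column s C)"
    and small: "spnorm realK (\<lambda>i j k. cpd A B C i j k - W i j k) < sigma_min A * sigma_min B * \<delta> / 2"
begin

abbreviation c :: "'n \<Rightarrow> complex ^ 2" where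
  "c r \<equiv> column r C"

definition bound :: real where
  "bound = spnorm realK (\<lambda>i j k. cpd A B C i j k - W i j k) / (sigma_min A * sigma_min B)"

definition homotopy :: "real \<Rightarrow> ('n, 'n, 2) tensor" where
  "homotopy t = (\<lambda>i j k. cpd A B C i j k - of_real t * (cpd A B C i j k - W i j k))"

lemma homotopy_0: "homotopy 0 = cpd A B C" and homotopy_1: "homotopy 1 = W"
  by (simp_all add: homotopy_def)

lemma tensorK_homotopy: "tensorK realK (homotopy t)"
  using TK WK by (auto simp: tensorK_def homotopy_def intro!: inK_intros)

lemma c_nonzero: "c r \<noteq> 0"
  using unit[of r] by auto

lemma vecK_c: "vecK realK (c r)"
  by (rule vecK_column[OF CK])

lemma sigma_min_pos: "sigma_min A > 0" "sigma_min B > 0" and delta_pos: "\<delta> > 0"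
proof -
  have "0 \<le> spnorm realK (\<lambda>i j k. cpd A B C i j k - W i j k)" by (rule spnorm_nonneg)
  then have pos: "0 < sigma_min A * sigma_min B * \<delta>" using small by linarith
  then have "sigma_min A \<noteq> 0" "sigma_min B \<noteq> 0" by auto
  then show A: "sigma_min A > 0" and B: "sigma_min B > 0"
    using sigma_min_nonneg[of A] sigma_min_nonneg[of B] by linarith+
  show "\<delta> > 0"
    using zero_less_mult_pos[of "sigma_min A * sigma_min B" \<delta>] pos A B by simp
qed

lemma delta_le_1: "\<delta> \<le> 1"
proof -
  obtain r s :: 'n where "r \<noteq> s"
    using card by (metis One_nat_def card_le_Suc0_iff_eq finite_class.finite_UNIV not_less_eq_eq numeral_2_eq_2)
  then show ?thesis using separated chordal_le_1 order_trans by blast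
qed

lemma bound_less: "bound < \<delta> / 2"
  using small spnorm_nonneg sigma_min_pos by (simp_all add: bound_def field_simps)

lemma root_near:
  assumes "0 \<le> t" "t \<le> 1" "vecK realK l" "l \<noteq> 0" "charpoly (homotopy t) (perp l) = 0"
  shows "\<exists>s. chordal (c s) l \<le> bound"
proof -
  have "invertible B" by (rule invertible_of_sigma_min_pos[OF sigma_min_pos(2)])
  moreover have "tensorK realK (\<lambda>i j k. cpd A B C i j k - W i j k)"
    using TK WK by (auto simp: tensorK_def intro!: inK_intros)
  ultimately obtain s
    where "sigma_min A * sigma_min B * chordal (c s) l \<le> spnorm realK (\<lambda>i j k. cpd A B C i j k - W i j k)"
    using root_near_column[OF TK _ _ unit assms(1-4)] assms(5) unfolding homotopy_def by blast
  then show ?thesis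
    using sigma_min_pos by (auto simp: bound_def field_simps mult.assoc)
qed

lemma far_from_other_columns:
  assumes "s \<noteq> r" "l \<noteq> 0" "chordal (c r) l \<le> \<delta> / 2"
  shows "\<delta> / 2 \<le> chordal (c s) l"
  using chordal_triangle[OF c_nonzero c_nonzero \<open>l \<noteq> 0\<close>, of s r] separated[OF assms(1)]
    chordal_commute[OF \<open>l \<noteq> 0\<close> c_nonzero, of r] assms(3) by linarith

definition chart_radius :: real where
  "chart_radius = (\<delta> / 2) / sqrt (1 - (\<delta> / 2)\<^sup>2)"

abbreviation chart :: "'n \<Rightarrow> complex \<Rightarrow> complex ^ 2" where
  "chart r \<equiv> chordal_chart (c r)"

lemma chart_radius_pos: "0 < chart_radius"
proof -
  have "(\<delta> / 2)\<^sup>2 < 1" using delta_pos delta_le_1 by (simp add: abs_square_less_1)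
  then show ?thesis using delta_pos by (simp add: chart_radius_def)
qed

lemma chart_nonzero: "chart r z \<noteq> 0"
  by (rule chordal_chart_nonzero[OF unit])

lemma chart_radius_chordal: "chart_radius / sqrt (1 + chart_radius\<^sup>2) = \<delta> / 2"
  unfolding chart_radius_def
  by (rule divide_sqrt_one_plus_square_inverse) (use delta_pos delta_le_1 in auto)

lemma chordal_chart_le:
  assumes "cmod z \<le> chart_radius"
  shows "chordal (c r) (chart r z) \<le> \<delta> / 2"
proof -
  have "chordal (c r) (chart r z) = cmod z / sqrt (1 + (cmod z)\<^sup>2)"
    by (rule chordal_chordal_chart[OF unit])
  also have "\<dots> \<le> chart_radius / sqrt (1 + chart_radius\<^sup>2)"
    by (rule divide_sqrt_one_plus_square_mono[OF norm_ge_zero assms])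
  finally show ?thesis unfolding chart_radius_chordal .
qed

lemma chordal_chart_boundary:
  assumes "cmod z = chart_radius"
  shows "chordal (c r) (chart r z) = \<delta> / 2"
  using chart_radius_chordal assms by (simp add: chordal_chordal_chart[OF unit])

lemma boundary_far:
  assumes "cmod z = chart_radius"
  shows "bound < chordal (c s) (chart r z)"
proof (cases "s = r")
  case True
  then show ?thesis using chordal_chart_boundary[OF assms, of r] bound_less by simp
next
  case False
  then show ?thesis
    using far_from_other_columns[OF False chart_nonzero] chordal_chart_boundary[OF assms] bound_less
    by fastforce
qed

lemma boundary_nonroot:
  assumes "0 \<le> t" "t \<le> 1" "vecK realK (chart r z)" "cmod z = chart_radius"
  shows "charpoly (homotopy t) (perp (chart r z)) \<noteq> 0"
  using root_near[OF assms(1-3) chart_nonzero] boundary_far[OF assms(4)] by (meson not_le)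

definition chart_charpoly :: "'n \<Rightarrow> real \<Rightarrow> complex \<Rightarrow> complex" where
  "chart_charpoly r t z = charpoly (homotopy t) (perp (chart r z))"

lemma chart_charpoly_entry:
  "slicecomb (homotopy t) (perp (chart r z)) $ i $ j =
     - (c r $ 2 + z * cperp (c r) $ 2) * (cpd A B C i j 1 - of_real t * (cpd A B C i j 1 - W i j 1))
     + (c r $ 1 + z * cperp (c r) $ 1) * (cpd A B C i j 2 - of_real t * (cpd A B C i j 2 - W i j 2))"
  by (simp add: slicecomb_nth sum_2 chordal_chart_def homotopy_def)

lemma continuous_on_chart_charpoly:
  assumes "continuous_on S f" "continuous_on S g"
  shows "continuous_on S (\<lambda>x. chart_charpoly r (f x) (g x))"
  unfolding chart_charpoly_def charpoly_def
  by (rule continuous_on_det, unfold chart_charpoly_entry) (intro continuous_intros assms)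

lemma holomorphic_chart_charpoly: "(\<lambda>z. chart_charpoly r t z) holomorphic_on S"
  unfolding chart_charpoly_def charpoly_def
  by (rule holomorphic_on_det, unfold chart_charpoly_entry) (intro holomorphic_intros)

lemma chart_charpoly_0:
  "chart_charpoly r 0 z = det A * det B * (- z) * (\<Prod>s\<in>UNIV - {r}. - wedge (c s) (chart r z))"
proof -
  have "chart_charpoly r 0 z = det A * det B * (\<Prod>s\<in>UNIV. linform (c s) (perp (chart r z)))"
    unfolding chart_charpoly_def homotopy_0 charpoly_cpd ..
  also have "(\<Prod>s\<in>UNIV. linform (c s) (perp (chart r z)))
      = linform (c r) (perp (chart r z)) * (\<Prod>s\<in>UNIV - {r}. linform (c s) (perp (chart r z)))"
    by (rule prod.remove) auto
  finally show ?thesis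
    by (simp add: linform_perp wedge_chordal_chart[OF unit] mult.assoc)
qed

text \<open>At \<open>t = 0\<close> the only zero of \<open>u \<mapsto> chart_charpoly r 0 u\<close> on the chart disc is the
  simple zero \<open>u = 0\<close>; the other factors keep their sign on the disc since the other columns
  are far away.\<close>

lemma chart_charpoly_0_sign_change:
  assumes realK
  shows "Re (chart_charpoly r 0 (of_real (- chart_radius))) * Re (chart_charpoly r 0 (of_real chart_radius)) < 0"
proof -
  define h where "h s u = Re (- wedge (c s) (chart r (of_real u)))" for s u
  have h: "- wedge (c s) (chart r (of_real u)) = of_real (h s u)" for s u
    using inK_wedge[OF vecK_c vecK_chordal_chart[OF vecK_c]] assms
    by (simp add: h_def inK_def)
  obtain D where D: "det A * det B = of_real D"
    using det_inK[OF AK] det_inK[OF BK] assms by (metis Reals_cases inK_def inK_intros(7))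
  have "D \<noteq> 0"
    using D invertible_of_sigma_min_pos[OF sigma_min_pos(1)] invertible_of_sigma_min_pos[OF sigma_min_pos(2)]
    by (auto simp: invertible_det_nz)
  have F0: "Re (chart_charpoly r 0 (of_real u)) = D * (- u) * (\<Prod>s\<in>UNIV - {r}. h s u)" for u
    unfolding chart_charpoly_0 D h by (simp flip: of_real_prod of_real_mult of_real_minus)
  have "h s (- chart_radius) * h s chart_radius > 0" if "s \<noteq> r" for s
  proof (rule nonvanishing_imp_same_sign[of "- chart_radius" chart_radius "h s"])
    show "continuous_on {- chart_radius..chart_radius} (h s)"
      unfolding h_def chordal_chart_def wedge_def vector_add_component vector_smult_component
      by (intro continuous_intros)
    fix u assume "- chart_radius \<le> u" "u \<le> chart_radius"
    then have "\<delta> / 2 \<le> chordal (c s) (chart r (of_real u))"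
      using far_from_other_columns[OF that chart_nonzero] chordal_chart_le by simp
    then show "h s u \<noteq> 0"
      using h[of s u] delta_pos chordal_eq_0_iff[OF c_nonzero chart_nonzero, of s r "of_real u"] by auto
  qed (use chart_radius_pos in simp)
  then have "(\<Prod>s\<in>UNIV - {r}. h s (- chart_radius)) * (\<Prod>s\<in>UNIV - {r}. h s chart_radius) > 0"
    unfolding prod.distrib[symmetric] by (intro prod_pos) auto
  moreover have "(D * chart_radius)\<^sup>2 > 0"
    using \<open>D \<noteq> 0\<close> chart_radius_pos by simp
  ultimately have "(D * chart_radius)\<^sup>2 * ((\<Prod>s\<in>UNIV - {r}. h s (- chart_radius)) * (\<Prod>s\<in>UNIV - {r}. h s chart_radius)) > 0"
    by simp
  then show ?thesis
    unfolding F0 by (simp add: power2_eq_square mult_ac)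
qed

lemma real_chart_root:
  assumes realK
  shows "\<exists>u. \<bar>u\<bar> \<le> chart_radius \<and> chart_charpoly r 1 (of_real u) = 0"
proof -
  define G where "G t u = Re (chart_charpoly r t (of_real u))" for t u
  have real: "chart_charpoly r t (of_real u) = of_real (G t u)" for t u
    using det_inK[OF matK_slicecomb[OF tensorK_homotopy vecK_perp[OF vecK_chordal_chart[OF vecK_c]]]] assms
    by (simp add: G_def chart_charpoly_def charpoly_def inK_def)
  have "\<exists>u. - chart_radius \<le> u \<and> u \<le> chart_radius \<and> G 1 u = 0"
  proof (rule real_root_persists)
    show "0 \<le> chart_radius" using chart_radius_pos by simp
    show "continuous_on {0..1} (\<lambda>t. G t u)" for u
      unfolding G_def by (intro continuous_intros continuous_on_chart_charpoly)
    show "continuous_on {- chart_radius..chart_radius} (G 1)"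
      unfolding G_def by (intro continuous_intros continuous_on_chart_charpoly)
    show "G t u \<noteq> 0" if "0 \<le> t" "t \<le> 1" "\<bar>u\<bar> = chart_radius" for t u
    proof -
      have "charpoly (homotopy t) (perp (chart r (of_real u))) \<noteq> 0"
        by (rule boundary_nonroot[OF that(1,2) vecK_chordal_chart[OF vecK_c]]) (use that(3) in simp)
      then show ?thesis using real[of t u] by (simp add: chart_charpoly_def)
    qed
    show "G 0 (- chart_radius) * G 0 chart_radius < 0"
      using chart_charpoly_0_sign_change[OF assms] by (simp add: G_def)
  qed
  then obtain u where u: "- chart_radius \<le> u" "u \<le> chart_radius" "G 1 u = 0" by blast
  then have "\<bar>u\<bar> \<le> chart_radius" by linarith
  then show ?thesis using real[of 1 u] u(3) by auto
qed

lemma complex_chart_root: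
  assumes "\<not> realK"
  shows "\<exists>z. cmod z < chart_radius \<and> chart_charpoly r 1 z = 0"
proof (rule holomorphic_root_persists)
  show "continuous_on ({0..1} \<times> cball 0 chart_radius) (\<lambda>p. chart_charpoly r (fst p) (snd p))"
    by (intro continuous_on_chart_charpoly continuous_intros)
  show "chart_charpoly r t holomorphic_on ball 0 chart_radius" for t
    by (rule holomorphic_chart_charpoly)
  show "chart_charpoly r t z \<noteq> 0" if "0 \<le> t" "t \<le> 1" "cmod z = chart_radius" for t z
    using boundary_nonroot[OF that(1,2) vecK_complex[OF assms] that(3)] by (simp add: chart_charpoly_def)
  show "cmod 0 < chart_radius" using chart_radius_pos by simp
  show "chart_charpoly r 0 0 = 0" by (simp add: chart_charpoly_0)
qed

lemma root_near_each_column: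
  "\<exists>l. vecK realK l \<and> l \<noteq> 0 \<and> charpoly W (perp l) = 0 \<and> chordal (c r) l \<le> bound"
proof -
  obtain z where z: "cmod z \<le> chart_radius" "vecK realK (chart r z)" "chart_charpoly r 1 z = 0"
  proof (cases realK)
    case True
    then obtain u where "\<bar>u\<bar> \<le> chart_radius" "chart_charpoly r 1 (of_real u) = 0"
      using real_chart_root by blast
    then show ?thesis using that[of "of_real u"] vecK_chordal_chart[OF vecK_c] by simp
  next
    case False
    then obtain z where "cmod z < chart_radius" "chart_charpoly r 1 z = 0"
      using complex_chart_root by blast
    then show ?thesis using that[of z] vecK_complex[OF False, of "chart r z"] by simp
  qed
  then have root: "charpoly W (perp (chart r z)) = 0"
    by (simp add: chart_charpoly_def homotopy_1)
  obtain s where s: "chordal (c s) (chart r z) \<le> bound"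
    using root_near[of 1, OF _ _ z(2) chart_nonzero] z(3) by (auto simp: chart_charpoly_def)
  have "s = r"
    using far_from_other_columns[OF _ chart_nonzero chordal_chart_le[OF z(1)]] s bound_less by fastforce
  then show ?thesis using z(2) chart_nonzero root s by blast
qed

lemma perturbed_roots:
  obtains l where "\<And>r. vecK realK (l r)" "\<And>r. l r \<noteq> 0" "\<And>r. charpoly W (perp (l r)) = 0"
    "\<And>r. chordal (c r) (l r) \<le> bound" "\<And>r s. r \<noteq> s \<Longrightarrow> wedge (l r) (l s) \<noteq> 0"
proof -
  have "\<forall>r. \<exists>l. vecK realK l \<and> l \<noteq> 0 \<and> charpoly W (perp l) = 0 \<and> chordal (c r) l \<le> bound"
    using root_near_each_column by blast
  then obtain l where l: "\<And>r. vecK realK (l r) \<and> l r \<noteq> 0 \<and> charpoly W (perp (l r)) = 0 \<and> chordal (c r) (l r) \<le> bound"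
    unfolding choice_iff by blast
  have "wedge (l r) (l s) \<noteq> 0" if "r \<noteq> s" for r s
  proof
    assume "wedge (l r) (l s) = 0"
    then have "chordal (c r) (l s) \<le> bound"
      using chordal_cong_right[OF c_nonzero, of "l r" "l s" r] l[of r] l[of s] by simp
    moreover have "chordal (c r) (c s) \<le> chordal (c r) (l s) + chordal (l s) (c s)"
      using chordal_triangle[OF c_nonzero c_nonzero] l[of s] by blast
    moreover have "chordal (l s) (c s) \<le> bound"
      using chordal_commute[OF _ c_nonzero, of "l s" s] l[of s] by simp
    ultimately show False
      using separated[OF that] bound_less by linarith
  qed
  with l show ?thesis by (intro that[of l]) auto
qed

lemma regular_direction: "\<exists>g. vecK realK g \<and> charpoly W g \<noteq> 0"
proof -
  fix r :: 'n
  have "charpoly (homotopy 1) (perp (chart r (of_real chart_radius))) \<noteq> 0"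
    using boundary_nonroot[OF _ _ vecK_chordal_chart[OF vecK_c]] chart_radius_pos by simp
  then show ?thesis
    using vecK_perp[OF vecK_chordal_chart[OF vecK_c]] by (auto simp: homotopy_1)
qed

theorem perturbed_tensor:
  shows "simple_tensor realK W" and "Krank realK W = CARD('n)"
    and "is_spectrum realK W LW \<Longrightarrow> \<exists>\<sigma>. bij \<sigma> \<and> (\<forall>r. chordal (c r) (LW (\<sigma> r)) \<le> bound)"
proof -
  obtain l where lK: "\<And>r. vecK realK (l r)" and l_nonzero: "\<And>r. l r \<noteq> 0"
    and roots: "\<And>r. charpoly W (perp (l r)) = 0" and near: "\<And>r. chordal (c r) (l r) \<le> bound"
    and distinct: "\<And>r s. r \<noteq> s \<Longrightarrow> wedge (l r) (l s) \<noteq> 0"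
    by (rule perturbed_roots) blast
  obtain g where gK: "vecK realK g" and g: "charpoly W g \<noteq> 0"
    using regular_direction by blast
  define L where "L = (\<chi> k r. l r $ k)"
  have col: "column r L = l r" for r by (simp add: L_def column_def)
  have LK: "matK realK L" using lK by (simp add: L_def matK_def vecK_def)
  obtain A' B' where K: "matK realK A'" "matK realK B'" and W: "W = cpd A' B' L"
    using cpd_of_distinct_pencil_roots[where l = l, OF WK gK g lK l_nonzero roots distinct]
    unfolding L_def by blast
  show "simple_tensor realK W"
    unfolding W by (rule simple_tensor_cpd[OF K LK gK]) (use g distinct in \<open>simp_all add: W col\<close>)
  show "Krank realK W = CARD('n)"
    unfolding W
    by (rule Krank_eq_card_of_cpd[OF K LK]) (use g in \<open>simp add: W charpoly_def invertible_det_nz\<close>)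
  assume spectrum: "is_spectrum realK W LW"
  have "\<exists>\<sigma>. bij \<sigma> \<and> (\<forall>r. wedge (LW (\<sigma> r)) (l r) = 0)"
  proof (rule matching_of_linear_factors[OF is_spectrum_nonzero[OF spectrum] _ distinct])
    show "(\<Prod>s\<in>UNIV. linform (LW s) (perp (l r))) = 0" for r
      using spectrum roots[of r] vecK_perp[OF lK, of r] unfolding is_spectrum_def by simp
  qed
  then obtain \<sigma> where "bij \<sigma>" and \<sigma>: "\<And>r. wedge (LW (\<sigma> r)) (l r) = 0" by blast
  have "chordal (c r) (LW (\<sigma> r)) = chordal (c r) (l r)" for r
    by (rule chordal_cong_right[OF c_nonzero is_spectrum_nonzero[OF spectrum] l_nonzero \<sigma>])
  then show "\<exists>\<sigma>. bij \<sigma> \<and> (\<forall>r. chordal (c r) (LW (\<sigma> r)) \<le> bound)"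
    using \<open>bij \<sigma>\<close> near by auto
qed

end

theorem theorem2p8:
  fixes realK :: bool
    and T W :: "('n::finite, 'n, 2) tensor"
    and A B :: "complex ^ 'n ^ 'n"
    and C :: "complex ^ 'n ^ 2"
    and L :: "'n \<Rightarrow> complex ^ 2"
  assumes R2: "CARD('n) \<ge> 2"
    and TK: "tensorK realK T" and WK: "tensorK realK W"
    and rankT: "Krank realK T = CARD('n)"
    and AK: "\<forall>i r. inK realK (A $ i $ r)" and BK: "\<forall>i r. inK realK (B $ i $ r)"
    and CK: "\<forall>k r. inK realK (C $ k $ r)"
    and cpdT: "T = cpd A B C"
    and Cunit: "\<forall>r. norm (column r C) = 1"
    and specT: "is_spectrum realK T L"
    and small: "spnorm realK (\<lambda>i j k. T i j k - W i j k)
        < sigma_min A * sigma_min B * Min {chordal (L i) (L j) |i j. i \<noteq> j} / 2"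
  shows "simple_tensor realK W \<and> Krank realK W = CARD('n) \<and>
         (\<forall>LW. is_spectrum realK W LW \<longrightarrow>
            md L LW \<le> spnorm realK (\<lambda>i j k. T i j k - W i j k) / (sigma_min A * sigma_min B))"
proof -
  define \<delta> where "\<delta> = Min {chordal (L i) (L j) |i j. i \<noteq> j}"
  have "0 < sigma_min A * sigma_min B * \<delta>"
    using small spnorm_nonneg[of realK "\<lambda>i j k. T i j k - W i j k"] unfolding \<delta>_def by linarith
  then have "0 < \<delta>"
    using sigma_min_nonneg[of A] sigma_min_nonneg[of B] by (auto simp: zero_less_mult_iff mult_less_0_iff)
  have columns: "column r C \<noteq> 0" for r
    using Cunit[rule_format, of r] by auto
  obtain \<tau> where "bij \<tau>" and \<tau>: "\<And>i. wedge (column (\<tau> i) C) (L i) = 0"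
    and separated: "\<And>r s. r \<noteq> s \<Longrightarrow> \<delta> \<le> chordal (column r C) (column s C)"
    using spectrum_of_cpd[OF specT[unfolded cpdT] columns \<open>0 < \<delta>\<close>[unfolded \<delta>_def]] unfolding \<delta>_def by blast
  interpret cpd_perturbation realK W A B C \<delta>
    by unfold_locales (use R2 TK WK AK BK CK Cunit separated small in \<open>simp_all add: matK_def cpdT \<delta>_def\<close>)
  have "md L LW \<le> bound" if spectrum: "is_spectrum realK W LW" for LW
  proof -
    obtain \<sigma> where "bij \<sigma>" and \<sigma>: "\<And>r. chordal (c r) (LW (\<sigma> r)) \<le> bound"
      using perturbed_tensor(3)[OF spectrum] by blast
    have "chordal (L i) (LW (\<sigma> (\<tau> i))) = chordal (c (\<tau> i)) (LW (\<sigma> (\<tau> i)))" for i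
      using chordal_cong_left[OF is_spectrum_nonzero[OF specT] c_nonzero is_spectrum_nonzero[OF spectrum]]
        \<tau>[of i] wedge_commute[of "L i" "c (\<tau> i)"] by simp
    then show ?thesis
      using md_le[of "\<sigma> \<circ> \<tau>" L LW bound] \<sigma> bij_comp[OF \<open>bij \<tau>\<close> \<open>bij \<sigma>\<close>] by simp
  qed
  then show ?thesis
    using perturbed_tensor(1,2) unfolding bound_def cpdT by blast
qed

end
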